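(* Let $A$ be a selfadjoint operator on a separable infinite-dimensional Hilbert space $\mathcal{H}$, and let $\mathcal{L}$ be either an $A$-regular Galerkin sequence or, if $A\ge0$, an $A^{1/2}$-regular Galerkin sequence. Then (i) $\sigma(A,\mathcal{L})$ and $\sigma_{\rm ess}(A,\mathcal{L})$ are closed subsets of $\mathbb{R}$; (ii) $\sigma_{\rm ess}(A)\subset\sigma_{\rm ess}(A,\mathcal{L})$ and $\sigma_{\rm disc}(A,\mathcal{L})\subset\sigma_{\rm disc}(A)$.
   Context: A sequence $\mathcal{L}=(\mathcal{L}_n)$ of finite-dimensional subspaces $\mathcal{L}_n\subset\operatorname{D}(A)$ is $A$-regular if for every $f\in\operatorname{D}(A)$ there exist $f_n\in\mathcal{L}_n$ with $\|f_n-f\|+\|Af_n-Af\|\to0$; then $A_n=\pi_nA|_{\mathcal{L}_n}$, $\pi_n$ the orthogonal projection onto $\mathcal{L}_n$. If $A\ge0$, finite-dimensional $\mathcal{L}_n\subset\operatorname{D}(A^{1/2})$ form an $A^{1/2}$-regular sequence if every $f\in\operatorname{D}(A^{1/2})$ is the limit of some $f_n\in\mathcal{L}_n$ in the norm $\|\cdot\|+\|A^{1/2}\cdot\|$; then $A_n:\mathcal{L}_n\to\mathcal{L}_n$ is defined by $\langle y,A_nx\rangle=\langle A^{1/2}y,A^{1/2}x\rangle$. Write $\pi_n(A-\lambda)x:=A_nx-\lambda x$ for $x\in\mathcal{L}_n$. The limiting spectrum $\sigma(A,\mathcal{L})$ is the set of $\lambda\in\mathbb{R}$ such that there exist $n_k\to\infty$,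 $\lambda_k\in\sigma(A_{n_k})$, $\lambda_k\to\lambda$. The limiting essential spectrum $\sigma_{\rm ess}(A,\mathcal{L})$ is the set of $\lambda\in\mathbb{R}$ such that there exist $n_k\to\infty$ and $x_k\in\mathcal{L}_{n_k}$ with $\|x_k\|=1$, $x_k\rightharpoonup0$ weakly, $\pi_{n_k}(A-\lambda)x_k\to0$. The limiting discrete spectrum is $\sigma_{\rm disc}(A,\mathcal{L})=\sigma(A,\mathcal{L})\setminus\sigma_{\rm ess}(A,\mathcal{L})$. $\sigma_{\rm ess}(A)$ and $\sigma_{\rm disc}(A)$ are the usual essential and discrete spectra. *)

theory Defs
  imports "HOL-Analysis.Analysis"
begin

class complex_vector = real_vector +
  fixes scaleC :: "complex \<Rightarrow> 'a \<Rightarrow> 'a" (infixr \<open>*\<^sub>C\<close> 75)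
  assumes scaleC_add_right: "a *\<^sub>C (x + y) = a *\<^sub>C x + a *\<^sub>C y"
    and scaleC_add_left: "(a + b) *\<^sub>C x = a *\<^sub>C x + b *\<^sub>C x"
    and scaleC_scaleC: "a *\<^sub>C (b *\<^sub>C x) = (a * b) *\<^sub>C x"
    and scaleC_one: "1 *\<^sub>C x = x"
    and scaleR_scaleC: "r *\<^sub>R x = complex_of_real r *\<^sub>C x"

text \<open>Inner product: conjugate-linear in the first, linear in the second argument.\<close>
class complex_inner = complex_vector + real_normed_vector +
  fixes cinner :: "'a \<Rightarrow> 'a \<Rightarrow> complex"
  assumes cinner_commute: "cinner x y = cnj (cinner y x)"
    and cinner_add_left: "cinner (x + y) z = cinner x z + cinner y z"
    and cinner_scaleC_left: "cinner (c *\<^sub>C x) y = cnj c * cinner x y"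
    and norm_eq_sqrt_cinner: "norm x = sqrt (Re (cinner x x))"

definition csubspace :: "'a::complex_vector set \<Rightarrow> bool" where
  "csubspace S \<longleftrightarrow> 0 \<in> S \<and> (\<forall>x\<in>S. \<forall>y\<in>S. x + y \<in> S) \<and> (\<forall>c. \<forall>x\<in>S. c *\<^sub>C x \<in> S)"

definition cspan :: "'a::complex_vector set \<Rightarrow> 'a set" where
  "cspan B = {\<Sum>b\<in>F. c b *\<^sub>C b | F c. finite F \<and> F \<subseteq> B}"

definition cfinite_dim :: "'a::complex_vector set \<Rightarrow> bool" where
  "cfinite_dim S \<longleftrightarrow> (\<exists>B. finite B \<and> cspan B = S)"

definition separable_space :: "'a::complex_inner itself \<Rightarrow> bool" where
  "separable_space _ \<longleftrightarrow> (\<exists>C::'a set. countable C \<and> closure C = UNIV)"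

text \<open>Orthogonal projection onto a (finite-dimensional, hence closed) subspace.\<close>
definition cproj :: "'a::complex_inner set \<Rightarrow> 'a \<Rightarrow> 'a" where
  "cproj L v = (THE w. w \<in> L \<and> (\<forall>y\<in>L. cinner y (v - w) = 0))"

definition weakly_to :: "(nat \<Rightarrow> 'a::complex_inner) \<Rightarrow> 'a \<Rightarrow> bool" where
  "weakly_to x a \<longleftrightarrow> (\<forall>y. (\<lambda>k. cinner y (x k)) \<longlonglongrightarrow> cinner y a)"

section \<open>Unbounded operators, given by a domain D and a map A (values off D irrelevant)\<close>

definition selfadjoint :: "'a::complex_inner set \<Rightarrow> ('a \<Rightarrow> 'a) \<Rightarrow> bool" where
  "selfadjoint D A \<longleftrightarrow>
     csubspace D \<and> closure D = UNIV \<and>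
     (\<forall>x\<in>D. \<forall>y\<in>D. A (x + y) = A x + A y) \<and>
     (\<forall>c. \<forall>x\<in>D. A (c *\<^sub>C x) = c *\<^sub>C A x) \<and>
     (\<forall>x\<in>D. \<forall>y\<in>D. cinner (A x) y = cinner x (A y)) \<and>
     (\<forall>y z. (\<forall>x\<in>D. cinner y (A x) = cinner z x) \<longrightarrow> y \<in> D \<and> A y = z)"

definition nonneg_op :: "'a::complex_inner set \<Rightarrow> ('a \<Rightarrow> 'a) \<Rightarrow> bool" where
  "nonneg_op D A \<longleftrightarrow> (\<forall>x\<in>D. 0 \<le> Re (cinner x (A x)))"

text \<open>(DS, S) is the nonnegative selfadjoint square root of (D, A): S \<ge> 0 selfadjoint and S^2 = A
  including domains (such an S exists and is unique for nonnegative selfadjoint A).\<close>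
definition is_op_sqrt :: "'a::complex_inner set \<Rightarrow> ('a \<Rightarrow> 'a) \<Rightarrow> 'a set \<Rightarrow> ('a \<Rightarrow> 'a) \<Rightarrow> bool" where
  "is_op_sqrt D A DS S \<longleftrightarrow> selfadjoint DS S \<and> nonneg_op DS S \<and>
     D = {x \<in> DS. S x \<in> DS} \<and> (\<forall>x\<in>D. S (S x) = A x)"

definition op_spectrum :: "'a::complex_inner set \<Rightarrow> ('a \<Rightarrow> 'a) \<Rightarrow> complex set" where
  "op_spectrum D A = {z. \<not> bij_betw (\<lambda>x. A x - z *\<^sub>C x) D UNIV}"

definition disc_spectrum :: "'a::complex_inner set \<Rightarrow> ('a \<Rightarrow> 'a) \<Rightarrow> complex set" where
  "disc_spectrum D A = {z \<in> op_spectrum D A.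
      (\<exists>e>0. ball z e \<inter> op_spectrum D A = {z}) \<and>
      {x \<in> D. A x = z *\<^sub>C x} \<noteq> {0} \<and> cfinite_dim {x \<in> D. A x = z *\<^sub>C x}}"

definition ess_spectrum :: "'a::complex_inner set \<Rightarrow> ('a \<Rightarrow> 'a) \<Rightarrow> complex set" where
  "ess_spectrum D A = op_spectrum D A - disc_spectrum D A"

definition galerkin_seq :: "'a::complex_inner set \<Rightarrow> (nat \<Rightarrow> 'a set) \<Rightarrow> bool" where
  "galerkin_seq D L \<longleftrightarrow> (\<forall>n. cfinite_dim (L n) \<and> L n \<subseteq> D)"

definition op_regular :: "'a::complex_inner set \<Rightarrow> ('a \<Rightarrow> 'a) \<Rightarrow> (nat \<Rightarrow> 'a set) \<Rightarrow> bool" where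
  "op_regular D T L \<longleftrightarrow> galerkin_seq D L \<and>
     (\<forall>f\<in>D. \<exists>g. (\<forall>n. g n \<in> L n) \<and>
        (\<lambda>n. norm (g n - f) + norm (T (g n) - T f)) \<longlonglongrightarrow> 0)"

definition galerkin_op :: "('a::complex_inner \<Rightarrow> 'a) \<Rightarrow> (nat \<Rightarrow> 'a set) \<Rightarrow> nat \<Rightarrow> 'a \<Rightarrow> 'a" where
  "galerkin_op A L n x = cproj (L n) (A x)"

text \<open>A_n on L_n defined by <y, A_n x> = <S y, S x> for y in L_n (S = A^(1/2)).\<close>
definition galerkin_form_op :: "('a::complex_inner \<Rightarrow> 'a) \<Rightarrow> (nat \<Rightarrow> 'a set) \<Rightarrow> nat \<Rightarrow> 'a \<Rightarrow> 'a" where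
  "galerkin_form_op S L n x = (THE w. w \<in> L n \<and> (\<forall>y\<in>L n. cinner y w = cinner (S y) (S x)))"

definition fin_spectrum :: "'a::complex_inner set \<Rightarrow> ('a \<Rightarrow> 'a) \<Rightarrow> complex set" where
  "fin_spectrum V T = {z. \<not> bij_betw (\<lambda>x. T x - z *\<^sub>C x) V V}"

definition lim_spectrum :: "(nat \<Rightarrow> 'a::complex_inner set) \<Rightarrow> (nat \<Rightarrow> 'a \<Rightarrow> 'a) \<Rightarrow> real set" where
  "lim_spectrum L An = {t::real. \<exists>nk lk. filterlim nk at_top sequentially \<and>
      (\<forall>k. lk k \<in> fin_spectrum (L (nk k)) (An (nk k))) \<and> lk \<longlonglongrightarrow> complex_of_real t}"

definition lim_ess_spectrum :: "(nat \<Rightarrow> 'a::complex_inner set) \<Rightarrow> (nat \<Rightarrow> 'a \<Rightarrow> 'a) \<Rightarrow> real set" where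
  "lim_ess_spectrum L An = {t::real. \<exists>nk x. filterlim nk at_top sequentially \<and>
      (\<forall>k. x k \<in> L (nk k) \<and> norm (x k) = 1) \<and> weakly_to x 0 \<and>
      (\<lambda>k. An (nk k) (x k) - complex_of_real t *\<^sub>C x k) \<longlonglongrightarrow> 0}"

definition lim_disc_spectrum :: "(nat \<Rightarrow> 'a::complex_inner set) \<Rightarrow> (nat \<Rightarrow> 'a \<Rightarrow> 'a) \<Rightarrow> real set" where
  "lim_disc_spectrum L An = lim_spectrum L An - lim_ess_spectrum L An"

end

theory Submission
  imports Defs "HOL-Library.Diagonal_Subsequence"
begin

text \<open>
  Both Galerkin methods share two approximation properties: an approximate eigenvector of A can be
  carried into some later trial space with the same residual up to a small error (for the
  form method via the Ritz projection for \<open>\<langle>S y, S x\<rangle> + \<langle>y, x\<rangle>\<close>), and weak limits of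
  normalised Galerkin eigenvectors with convergent eigenvalues are eigenvectors of A.
  Every point of the essential spectrum carries a Weyl sequence: an orthonormal sequence of
  eigenvectors if the eigenspace is infinite-dimensional, otherwise approximate eigenvectors which,
  after passing to a weakly convergent subsequence, are asymptotically orthogonal to all
  eigenvectors. Carrying it into the trial spaces gives a point of the limiting essential spectrum.
  Conversely, Galerkin eigenvectors for a point of the limiting discrete spectrum have a nonzero
  weak limit, which is an eigenvector of A, and the point is discrete by the first inclusion.
  Closedness follows from diagonal characterisations of both limiting spectra, weak nullity being
  tested against a countable dense set.
\<close>

interpretation cvs: vector_space "scaleC :: complex \<Rightarrow> 'a::complex_vector \<Rightarrow> 'a"
  by unfold_locales (simp_all add: scaleC_add_right scaleC_add_left scaleC_scaleC scaleC_one)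

lemma cspan_eq: "cspan B = cvs.span B"
  unfolding cspan_def cvs.span_explicit by auto

lemma csubspace_eq: "csubspace S = cvs.subspace S"
  unfolding csubspace_def cvs.subspace_def by auto

lemma cfinite_dim_subspace: "cfinite_dim V \<Longrightarrow> cvs.subspace V"
  unfolding cfinite_dim_def cspan_eq by auto

lemma cinner_add_right: "cinner x (y + z) = cinner x y + cinner x z"
  by (metis cinner_add_left cinner_commute complex_cnj_add)

lemma cinner_scaleC_right: "cinner x (c *\<^sub>C y) = c * cinner x y"
  by (metis cinner_commute cinner_scaleC_left complex_cnj_cnj complex_cnj_mult)

lemma cinner_zero_left [simp]: "cinner 0 x = 0"
  using cinner_add_left[of 0 0 x] by simp

lemma cinner_zero_right [simp]: "cinner x 0 = 0"
  using cinner_add_right[of x 0 0] by simp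

lemma cinner_minus_left: "cinner (- x) y = - cinner x y"
  using cinner_add_left[of x "-x" y] by (simp add: add_eq_0_iff)

lemma cinner_minus_right: "cinner x (- y) = - cinner x y"
  using cinner_add_right[of x y "-y"] by (simp add: add_eq_0_iff)

lemma cinner_diff_left: "cinner (x - y) z = cinner x z - cinner y z"
  using cinner_add_left[of x "-y" z] by (simp add: cinner_minus_left)

lemma cinner_diff_right: "cinner x (y - z) = cinner x y - cinner x z"
  using cinner_add_right[of x y "-z"] by (simp add: cinner_minus_right)

lemma cinner_sum_left: "cinner (\<Sum>i\<in>I. f i) y = (\<Sum>i\<in>I. cinner (f i) y)"
  by (induction I rule: infinite_finite_induct) (auto simp: cinner_add_left)

lemma cinner_sum_right: "cinner y (\<Sum>i\<in>I. f i) = (\<Sum>i\<in>I. cinner y (f i))"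
  by (induction I rule: infinite_finite_induct) (auto simp: cinner_add_right)

lemma cinner_self: "cinner (x::'a::complex_inner) x = complex_of_real ((norm x)^2)"
proof -
  have "Im (cinner x x) = Im (cnj (cinner x x))" using cinner_commute[of x x] by simp
  moreover have "Re (cinner x x) \<ge> 0"
    using norm_eq_sqrt_cinner[of x] norm_ge_zero[of x] real_sqrt_ge_0_iff by metis
  ultimately show ?thesis using norm_eq_sqrt_cinner[of x] by (simp add: complex_eq_iff)
qed

lemma cinner_self_Re: "Re (cinner (x::'a::complex_inner) x) = (norm x)^2"
  by (simp add: cinner_self)

lemma cinner_self_eq_0 [simp]: "cinner (x::'a::complex_inner) x = 0 \<longleftrightarrow> x = 0"
  by (simp add: cinner_self)

lemma cnj_mult_self: "cnj a * a = complex_of_real ((cmod a)^2)"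
  using complex_norm_square[of a] by (simp add: mult.commute)

lemma norm_scaleC: "norm (c *\<^sub>C (x::'a::complex_inner)) = cmod c * norm x"
proof -
  have "(norm (c *\<^sub>C x))^2 = Re (cnj c * c * cinner x x)"
    by (simp add: cinner_self_Re[symmetric] cinner_scaleC_left cinner_scaleC_right ac_simps)
  also have "\<dots> = (cmod c * norm x)^2"
    by (simp only: cnj_mult_self cinner_self of_real_mult[symmetric] Re_complex_of_real power_mult_distrib)
  finally show ?thesis by (simp add: power2_eq_iff_nonneg)
qed

lemma scaleC_2: "(2::complex) *\<^sub>C v = v + v"
  using scaleC_add_left[of 1 1 v] by (simp add: scaleC_one)

lemma norm_scaleC_of_real: "norm (complex_of_real r *\<^sub>C (x::'a::complex_inner)) = \<bar>r\<bar> * norm x"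
  by (simp add: norm_scaleC)

lemma norm_diff_scaleC_of_real_le:
  fixes y v :: "'a::complex_inner"
  shows "norm (y - complex_of_real t *\<^sub>C v) \<le> norm (y - complex_of_real m *\<^sub>C v) + \<bar>m - t\<bar> * norm v"
proof -
  have eq: "y - complex_of_real t *\<^sub>C v = (y - complex_of_real m *\<^sub>C v) + complex_of_real (m - t) *\<^sub>C v"
    by (simp add: scaleC_add_left[symmetric] algebra_simps)
  have "norm (y - complex_of_real t *\<^sub>C v) \<le> norm (y - complex_of_real m *\<^sub>C v) + norm (complex_of_real (m - t) *\<^sub>C v)"
    unfolding eq by (rule norm_triangle_ineq)
  thus ?thesis by (simp only: norm_scaleC_of_real)
qed

lemma normalize_close:
  fixes y u :: "'a::complex_inner"
  assumes yu: "norm (y - u) \<le> \<epsilon>" and u: "norm u = 1" and \<epsilon>: "\<epsilon> \<le> 1/2"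
  shows "norm y \<ge> 1/2" "norm (complex_of_real (1 / norm y) *\<^sub>C y - u) \<le> 2 * \<epsilon>"
proof -
  have ny: "\<bar>norm y - 1\<bar> \<le> \<epsilon>" using norm_triangle_ineq3[of y u] yu u by simp
  thus y: "norm y \<ge> 1/2" using \<epsilon> by linarith
  hence y0: "y \<noteq> 0" by auto
  have "complex_of_real (1 / norm y) *\<^sub>C y - y = complex_of_real (1 / norm y - 1) *\<^sub>C y"
    by (simp add: scaleC_add_left[symmetric] algebra_simps scaleC_one cvs.scale_left_diff_distrib)
  hence "norm (complex_of_real (1 / norm y) *\<^sub>C y - y) = \<bar>(1 / norm y - 1) * norm y\<bar>"
    by (simp only: norm_scaleC_of_real abs_mult abs_norm_cancel)
  also have "(1 / norm y - 1) * norm y = 1 - norm y" using y0 by (simp add: field_simps)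
  hence "\<bar>(1 / norm y - 1) * norm y\<bar> = \<bar>norm y - 1\<bar>" by (simp add: abs_minus_commute)
  finally have "norm (complex_of_real (1 / norm y) *\<^sub>C y - y) \<le> \<epsilon>" using ny by simp
  thus "norm (complex_of_real (1 / norm y) *\<^sub>C y - u) \<le> 2 * \<epsilon>"
    using norm_triangle_ineq[of "complex_of_real (1 / norm y) *\<^sub>C y - y" "y - u"] yu by simp
qed

lemma norm_diff_proj_line_squared:
  fixes u y :: "'a::complex_inner"
  assumes "y \<noteq> 0"
  shows "(norm (u - (cinner y u / complex_of_real ((norm y)^2)) *\<^sub>C y))^2
          = (norm u)^2 - (cmod (cinner y u))^2 / (norm y)^2"
proof -
  define N where "N = (norm y)^2"
  have N: "N > 0" using assms by (simp add: N_def)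
  define a where "a = cinner y u"
  have xy: "cinner u y = cnj a" by (simp add: a_def cinner_commute[of u y])
  define c where "c = a / complex_of_real N"
  have "cinner (u - c *\<^sub>C y) (u - c *\<^sub>C y) =
     cinner u u - c * cinner u y - cnj c * cinner y u + cnj c * c * cinner y y"
    by (simp add: cinner_diff_left cinner_diff_right cinner_scaleC_left cinner_scaleC_right algebra_simps)
  also have "\<dots> = complex_of_real ((norm u)^2 - (cmod a)^2 / N)"
  proof -
    have aa: "a * cnj a = complex_of_real ((cmod a)^2)" using complex_norm_square[of a] by simp
    have e1: "c * cinner u y = complex_of_real ((cmod a)^2 / N)"
      unfolding xy c_def using aa by simp
    have e2: "cnj c * cinner y u = complex_of_real ((cmod a)^2 / N)"
      unfolding c_def a_def[symmetric] using aa by (simp add: mult.commute)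
    have cc: "cnj c * c = complex_of_real ((cmod a)^2 / N^2)"
      unfolding c_def using aa by (simp add: power2_eq_square mult.commute)
    have e3: "cnj c * c * cinner y y = complex_of_real ((cmod a)^2 / N)"
    proof -
      have yy: "cinner y y = complex_of_real N" by (simp add: cinner_self N_def)
      have r: "(cmod a)^2 / N^2 * N = (cmod a)^2/N" using N by (simp add: power2_eq_square field_simps)
      show ?thesis unfolding cc yy of_real_mult[symmetric] r ..
    qed
    show ?thesis unfolding e1 e2 e3 by (simp add: cinner_self)
  qed
  finally have "cinner (u - c *\<^sub>C y) (u - c *\<^sub>C y) = complex_of_real ((norm u)^2 - (cmod a)^2 / N)" .
  hence "Re (cinner (u - c *\<^sub>C y) (u - c *\<^sub>C y)) = (norm u)^2 - (cmod a)^2 / N" by simp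
  thus ?thesis by (simp add: cinner_self_Re c_def a_def N_def)
qed

lemma Cauchy_Schwarz: "cmod (cinner (x::'a::complex_inner) y) \<le> norm x * norm y"
proof (cases "y = 0")
  case False
  have "0 \<le> (norm x)^2 - (cmod (cinner y x))^2 / (norm y)^2"
    using norm_diff_proj_line_squared[OF False, of x] by (metis zero_le_power2)
  hence "(cmod (cinner y x))^2 \<le> (norm x * norm y)^2"
    using False by (simp add: field_simps power_mult_distrib)
  hence "cmod (cinner y x) \<le> norm x * norm y" by (rule power2_le_imp_le) simp
  thus ?thesis by (metis cinner_commute complex_mod_cnj)
qed simp

lemma pythagoras:
  assumes "cinner a b = 0"
  shows "(norm (a + b))^2 = (norm a)^2 + (norm b)^2"
proof -
  have "cinner b a = 0" using assms cinner_commute[of b a] by simp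
  thus ?thesis using assms
    by (simp add: cinner_self_Re[symmetric] cinner_add_left cinner_add_right)
qed

lemma parallelogram_law:
  fixes a b :: "'a::complex_inner"
  shows "(norm (a + b))^2 + (norm (a - b))^2 = 2 * (norm a)^2 + 2 * (norm b)^2"
  by (simp add: cinner_self_Re[symmetric] cinner_add_left cinner_add_right
      cinner_diff_left cinner_diff_right)

lemma tendsto_cinner_right:
  assumes "x \<longlonglongrightarrow> a" shows "(\<lambda>n. cinner w (x n)) \<longlonglongrightarrow> cinner w a"
proof -
  have "(\<lambda>n. norm w * norm (x n - a)) \<longlonglongrightarrow> norm w * norm (a - a)"
    using assms by (intro tendsto_intros)
  hence z: "(\<lambda>n. norm w * norm (x n - a)) \<longlonglongrightarrow> 0" by simp
  have "(\<lambda>n. cinner w (x n) - cinner w a) \<longlonglongrightarrow> 0"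
  proof (rule Lim_null_comparison[OF _ z])
    show "\<forall>\<^sub>F n in sequentially. norm (cinner w (x n) - cinner w a) \<le> norm w * norm (x n - a)"
      using Cauchy_Schwarz[of w] by (simp add: cinner_diff_right[symmetric])
  qed
  thus ?thesis by (simp add: LIM_zero_iff)
qed

lemma tendsto_cinner_left:
  assumes "x \<longlonglongrightarrow> a" shows "(\<lambda>n. cinner (x n) w) \<longlonglongrightarrow> cinner a w"
proof -
  have "(\<lambda>n. cnj (cinner w (x n))) \<longlonglongrightarrow> cnj (cinner w a)"
    by (intro tendsto_cnj tendsto_cinner_right assms)
  moreover have "\<And>n. cinner (x n) w = cnj (cinner w (x n))" by (rule cinner_commute)
  moreover have "cinner a w = cnj (cinner w a)" by (rule cinner_commute)
  ultimately show ?thesis by simp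
qed

lemma tendsto_scaleC:
  fixes f :: "nat \<Rightarrow> 'a::complex_inner"
  assumes "f \<longlonglongrightarrow> a" shows "(\<lambda>n. c *\<^sub>C f n) \<longlonglongrightarrow> c *\<^sub>C a"
proof -
  have "(\<lambda>n. cmod c * norm (f n - a)) \<longlonglongrightarrow> cmod c * norm (a - a)"
    using assms by (intro tendsto_intros)
  hence z: "(\<lambda>n. cmod c * norm (f n - a)) \<longlonglongrightarrow> 0" by simp
  have "(\<lambda>n. c *\<^sub>C f n - c *\<^sub>C a) \<longlonglongrightarrow> 0"
    by (rule Lim_null_comparison[OF _ z]) (simp add: norm_scaleC cvs.scale_right_diff_distrib[symmetric])
  thus ?thesis by (simp add: LIM_zero_iff)
qed

lemma tendsto_0_if_norm_le_inverse_Suc: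
  assumes "\<And>k. norm (f k) \<le> c * inverse (real (Suc k))"
  shows "f \<longlonglongrightarrow> 0"
proof (rule Lim_null_comparison)
  show "\<forall>\<^sub>F k in sequentially. norm (f k) \<le> c * inverse (real (Suc k))" using assms by simp
  show "(\<lambda>k. c * inverse (real (Suc k))) \<longlonglongrightarrow> 0"
    using tendsto_mult[OF tendsto_const[of c] LIMSEQ_inverse_real_of_nat] by simp
qed

lemma seq_choice_at_top:
  assumes "\<And>k. \<exists>n\<ge>k. \<exists>x. P k n x"
  obtains nk xk where "filterlim nk at_top sequentially" "\<And>k. P k (nk k) (xk k)"
proof -
  have "\<forall>k. \<exists>p. fst p \<ge> k \<and> P k (fst p) (snd p)" using assms by force
  then obtain p where p: "\<forall>k. fst (p k) \<ge> k \<and> P k (fst (p k)) (snd (p k))"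
    using choice[of "\<lambda>k p. fst p \<ge> k \<and> P k (fst p) (snd p)"] by blast
  have "filterlim (\<lambda>k. fst (p k)) at_top sequentially"
    by (rule filterlim_at_top_mono[OF filterlim_ident]) (use p in simp)
  thus ?thesis using that[of "\<lambda>k. fst (p k)" "\<lambda>k. snd (p k)"] p by blast
qed

section \<open>Finite orthonormal systems and orthogonal projections\<close>

definition orthonormal :: "'a::complex_inner set \<Rightarrow> bool" where
  "orthonormal E \<longleftrightarrow> (\<forall>e\<in>E. norm e = 1) \<and> (\<forall>e\<in>E. \<forall>f\<in>E. e \<noteq> f \<longrightarrow> cinner e f = 0)"

definition fproj :: "'a::complex_inner set \<Rightarrow> 'a \<Rightarrow> 'a" where
  "fproj E v = (\<Sum>e\<in>E. cinner e v *\<^sub>C e)"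

lemma cinner_self_norm1: "norm (e::'a::complex_inner) = 1 \<Longrightarrow> cinner e e = 1"
  by (simp add: cinner_self)

lemma fproj_in_span: "fproj E v \<in> cvs.span E"
  unfolding fproj_def by (intro cvs.span_sum cvs.span_scale cvs.span_base)

lemma cinner_fproj:
  assumes "finite E" "orthonormal E" "e \<in> E"
  shows "cinner e (fproj E v) = cinner e v"
proof -
  have "cinner e (fproj E v) = (\<Sum>f\<in>E. cinner f v * cinner e f)"
    unfolding fproj_def by (simp add: cinner_sum_right cinner_scaleC_right)
  also have "\<dots> = cinner e v * cinner e e + (\<Sum>f\<in>E-{e}. cinner f v * cinner e f)"
    using assms by (simp add: sum.remove)
  also have "(\<Sum>f\<in>E-{e}. cinner f v * cinner e f) = 0"
    using assms unfolding orthonormal_def by (intro sum.neutral) auto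
  finally show ?thesis using assms unfolding orthonormal_def by (simp add: cinner_self_norm1)
qed

lemma cinner_span_eq_0:
  assumes "y \<in> cvs.span E" "\<And>e. e \<in> E \<Longrightarrow> cinner e w = 0"
  shows "cinner y w = 0"
  using assms(1)
proof (induction rule: cvs.span_induct_alt)
  case base thus ?case by simp
next
  case (step c x y)
  have "cinner x w = 0" using step(1) assms(2) by blast
  thus ?case using step(2) by (simp add: cinner_add_left cinner_scaleC_left)
qed

lemma fproj_orthogonal:
  assumes "finite E" "orthonormal E" "y \<in> cvs.span E"
  shows "cinner y (v - fproj E v) = 0"
proof (rule cinner_span_eq_0[OF assms(3)])
  fix e assume "e \<in> E"
  thus "cinner e (v - fproj E v) = 0" using assms by (simp add: cinner_diff_right cinner_fproj)
qed

lemma fproj_id: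
  assumes "finite E" "orthonormal E" "y \<in> cvs.span E"
  shows "fproj E y = y"
proof -
  have "y - fproj E y \<in> cvs.span E" using assms fproj_in_span by (blast intro: cvs.span_diff)
  hence "cinner (y - fproj E y) (y - fproj E y) = 0" by (rule fproj_orthogonal[OF assms(1,2)])
  thus ?thesis by simp
qed

lemma fproj_pythagoras:
  assumes "finite E" "orthonormal E"
  shows "(norm v)^2 = (norm (fproj E v))^2 + (norm (v - fproj E v))^2"
proof -
  have "cinner (fproj E v) (v - fproj E v) = 0" using fproj_orthogonal[OF assms fproj_in_span] .
  from pythagoras[OF this] show ?thesis by simp
qed

lemma fproj_norm_le:
  assumes "finite E" "orthonormal E"
  shows "norm (fproj E v) \<le> norm v"
proof -
  have "(norm (fproj E v))^2 \<le> (norm v)^2" using fproj_pythagoras[OF assms, of v] by simp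
  thus ?thesis by (rule power2_le_imp_le) simp
qed

lemma fproj_norm_sq:
  assumes "finite E" "orthonormal E"
  shows "(norm (fproj E v))^2 = (\<Sum>e\<in>E. (cmod (cinner e v))^2)"
proof -
  have "(norm (fproj E v))^2 = Re (cinner (fproj E v) (fproj E v))" by (simp add: cinner_self_Re)
  also have "cinner (fproj E v) (fproj E v) = (\<Sum>e\<in>E. cnj (cinner e v) * cinner e (fproj E v))"
    by (subst (1) fproj_def) (simp add: cinner_sum_left cinner_scaleC_left)
  also have "\<dots> = (\<Sum>e\<in>E. complex_of_real ((cmod (cinner e v))^2))"
    using assms by (intro sum.cong) (auto simp: cinner_fproj cnj_mult_self)
  finally show ?thesis by (simp add: Re_sum)
qed

lemma bessel_inequality:
  assumes "finite E" "orthonormal E"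
  shows "(\<Sum>e\<in>E. (cmod (cinner e v))^2) \<le> (norm v)^2"
  using fproj_pythagoras[OF assms, of v] fproj_norm_sq[OF assms, of v] by simp

lemma orthonormal_insert:
  assumes "orthonormal E" "norm e = 1" "\<And>f. f \<in> E \<Longrightarrow> cinner f e = 0"
  shows "orthonormal (insert e E)"
proof -
  have "cinner e f = 0" if "f \<in> E" for f using assms(3)[OF that] cinner_commute[of e f] by simp
  thus ?thesis using assms unfolding orthonormal_def by blast
qed

lemma orthonormal_extend:
  assumes "finite E" "orthonormal E" "b \<notin> cvs.span E"
  obtains e where "norm e = 1" "\<And>f. f \<in> E \<Longrightarrow> cinner f e = 0"
    "cvs.span (insert e E) = cvs.span (insert b E)"
proof
  define r where "r = b - fproj E b"
  have r0: "r \<noteq> 0" using assms(3) fproj_in_span[of E b] by (auto simp: r_def)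
  define e where "e = complex_of_real (1 / norm r) *\<^sub>C r"
  show "norm e = 1" using r0 by (simp add: e_def norm_scaleC norm_divide)
  show "cinner f e = 0" if "f \<in> E" for f
    using assms(1,2) that by (simp add: e_def r_def cinner_scaleC_right cinner_diff_right cinner_fproj)
  have "fproj E b \<in> cvs.span (insert b E)"
    using fproj_in_span cvs.span_mono[OF subset_insertI] by blast
  hence "e \<in> cvs.span (insert b E)"
    unfolding e_def r_def by (intro cvs.span_scale cvs.span_diff cvs.span_base[OF insertI1])
  moreover have "b \<in> cvs.span (insert e E)"
  proof -
    have "r = complex_of_real (norm r) *\<^sub>C e" using r0 by (simp add: e_def scaleC_scaleC)
    hence "fproj E b + r \<in> cvs.span (insert e E)"
      by (metis cvs.span_add cvs.span_base cvs.span_mono cvs.span_scale fproj_in_span insertI1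
          subsetD subset_insertI)
    thus ?thesis by (simp add: r_def)
  qed
  ultimately show "cvs.span (insert e E) = cvs.span (insert b E)"
    unfolding cvs.span_eq by (auto intro: cvs.span_base)
qed

lemma gram_schmidt:
  assumes "finite B"
  shows "\<exists>E. finite E \<and> orthonormal E \<and> cvs.span E = cvs.span (B::'a::complex_inner set)"
  using assms
proof (induction rule: finite_induct)
  case empty thus ?case by (intro exI[of _ "{}"]) (simp add: orthonormal_def)
next
  case (insert b B)
  then obtain E where E: "finite E" "orthonormal E" "cvs.span E = cvs.span B" by blast
  have span_insert_eq: "cvs.span (insert b E) = cvs.span (insert b B)"
    by (simp add: cvs.span_insert E(3))
  show ?case
  proof (cases "b \<in> cvs.span B")
    case True thus ?thesis using E cvs.span_redundant by metis
  next
    case False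
    then obtain e where "norm e = 1" "\<And>f. f \<in> E \<Longrightarrow> cinner f e = 0"
      "cvs.span (insert e E) = cvs.span (insert b E)"
      using orthonormal_extend[OF E(1,2)] E(3) by metis
    thus ?thesis using E orthonormal_insert[OF E(2)] span_insert_eq
      by (intro exI[of _ "insert e E"]) auto
  qed
qed

lemma cfinite_dim_orthonormal_basis:
  assumes "cfinite_dim (V::'a::complex_inner set)"
  obtains E where "finite E" "orthonormal E" "cvs.span E = V"
  using assms gram_schmidt unfolding cfinite_dim_def cspan_eq by metis

lemma cproj_eq_fproj:
  assumes "finite E" "orthonormal E" "V = cvs.span E"
  shows "cproj V v = fproj E v"
  unfolding cproj_def
proof (rule the_equality)
  show "fproj E v \<in> V \<and> (\<forall>y\<in>V. cinner y (v - fproj E v) = 0)"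
    using assms fproj_in_span fproj_orthogonal by blast
next
  fix w assume w: "w \<in> V \<and> (\<forall>y\<in>V. cinner y (v - w) = 0)"
  have d: "fproj E v - w \<in> V" using w assms fproj_in_span by (blast intro: cvs.span_diff)
  have "cinner (fproj E v - w) (v - w) = 0" using w d by blast
  moreover have "cinner (fproj E v - w) (v - fproj E v) = 0" using d assms fproj_orthogonal by blast
  moreover have "cinner (fproj E v - w) (fproj E v - w) =
     cinner (fproj E v - w) (v - w) - cinner (fproj E v - w) (v - fproj E v)"
    by (simp add: cinner_diff_right)
  ultimately have "cinner (fproj E v - w) (fproj E v - w) = 0" by simp
  thus "w = fproj E v" by simp
qed

lemma
  assumes "cfinite_dim V"
  shows cproj_in: "cproj V v \<in> V"
    and cproj_orthogonal: "y \<in> V \<Longrightarrow> cinner y (v - cproj V v) = 0"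
    and norm_cproj_le: "norm (cproj V v) \<le> norm v"
    and cproj_id: "v \<in> V \<Longrightarrow> cproj V v = v"
    and cproj_add: "cproj V (u + v) = cproj V u + cproj V v"
    and cproj_scaleC: "cproj V (c *\<^sub>C v) = c *\<^sub>C cproj V v"
proof -
  obtain E where E: "finite E" "orthonormal E" "cvs.span E = V" using cfinite_dim_orthonormal_basis[OF assms] .
  note eq = cproj_eq_fproj[OF E(1,2) E(3)[symmetric]]
  show "cproj V v \<in> V" unfolding eq using fproj_in_span E by blast
  show "y \<in> V \<Longrightarrow> cinner y (v - cproj V v) = 0" unfolding eq using fproj_orthogonal E by blast
  show "norm (cproj V v) \<le> norm v" unfolding eq using fproj_norm_le E by blast
  show "v \<in> V \<Longrightarrow> cproj V v = v" unfolding eq using fproj_id E by blast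
  show "cproj V (u + v) = cproj V u + cproj V v"
    unfolding eq fproj_def by (simp add: cinner_add_right scaleC_add_left sum.distrib)
  show "cproj V (c *\<^sub>C v) = c *\<^sub>C cproj V v"
    unfolding eq fproj_def by (simp add: cinner_scaleC_right cvs.scale_sum_right scaleC_scaleC)
qed

lemma cproj_diff: "cfinite_dim V \<Longrightarrow> cproj V (u - v) = cproj V u - cproj V v"
  by (metis cproj_add diff_add_cancel eq_diff_eq)

lemma linear_inj_on_imp_surj_on:
  fixes f :: "'a::complex_inner \<Rightarrow> 'a"
  assumes fd: "cfinite_dim V" and fV: "f ` V \<subseteq> V" and inj: "inj_on f V"
    and add: "\<And>x y. f (x + y) = f x + f y" and sc: "\<And>c x. f (c *\<^sub>C x) = c *\<^sub>C f x"
  shows "f ` V = V"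
proof -
  interpret lf: Vector_Spaces.linear "(*\<^sub>C)" "(*\<^sub>C)" f
    by unfold_locales (simp_all add: add sc scaleC_add_right scaleC_add_left scaleC_scaleC scaleC_one)
  have sV: "cvs.subspace V" by (rule cfinite_dim_subspace[OF fd])
  obtain B where B: "B \<subseteq> V" "cvs.independent B" "V \<subseteq> cvs.span B" "card B = cvs.dim V"
    by (rule cvs.basis_exists)
  have spB: "cvs.span B = V" by (rule cvs.span_subspace[OF B(1) B(3) sV])
  have ind: "cvs.independent (f ` B)"
    by (rule lf.independent_injective_image[OF B(2)]) (simp add: spB inj)
  have cd: "card (f ` B) = card B" by (rule card_image[OF inj_on_subset[OF inj B(1)]])
  obtain C where C: "finite C" "cvs.span C = V" using fd unfolding cfinite_dim_def cspan_eq by blast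
  have "B \<subseteq> cvs.span C" using B(1) C(2) by simp
  hence finB: "finite B" using cvs.independent_span_bound[OF C(1) B(2)] by blast
  have "V \<subseteq> cvs.span (f ` B)"
  proof (rule ccontr)
    assume "\<not> ?thesis"
    then obtain a where a: "a \<in> V" "a \<notin> cvs.span (f ` B)" by auto
    have i2: "cvs.independent (insert a (f ` B))" by (rule cvs.independent_insertI[OF a(2) ind])
    have "f ` B \<subseteq> V" using fV B(1) by blast
    hence s2: "insert a (f ` B) \<subseteq> cvs.span B" unfolding spB using a(1) by blast
    have le: "card (insert a (f ` B)) \<le> card B" using cvs.independent_span_bound[OF finB i2 s2] by (rule conjunct2)
    have anot: "a \<notin> f ` B" using a(2) cvs.span_superset[of "f ` B"] by blast
    have "card (insert a (f ` B)) = Suc (card B)"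
      using card_insert_disjoint[of "f ` B" a] finB cd anot by simp
    with le show False by simp
  qed
  also have "cvs.span (f ` B) = f ` V" using lf.span_image spB by simp
  finally show ?thesis using fV by blast
qed

lemma linear_on_inj_on_imp_surj_on:
  fixes f :: "'a::complex_inner \<Rightarrow> 'a"
  assumes fd: "cfinite_dim V" and fV: "f ` V \<subseteq> V" and inj: "inj_on f V"
    and add: "\<And>x y. x \<in> V \<Longrightarrow> y \<in> V \<Longrightarrow> f (x + y) = f x + f y"
    and sc: "\<And>c x. x \<in> V \<Longrightarrow> f (c *\<^sub>C x) = c *\<^sub>C f x"
  shows "f ` V = V"
proof -
  \<comment> \<open>extend f to a globally linear map by precomposing with the projection onto V\<close>
  define g where "g x = f (cproj V x)" for x
  have gf: "g x = f x" if "x \<in> V" for x using cproj_id[OF fd that] by (simp add: g_def)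
  have "g ` V = V"
  proof (rule linear_inj_on_imp_surj_on[OF fd])
    show "g ` V \<subseteq> V" "inj_on g V" using fV inj gf by (auto simp: inj_on_def)
    show "g (x + y) = g x + g y" for x y
      unfolding g_def cproj_add[OF fd] by (simp add: add cproj_in[OF fd])
    show "g (c *\<^sub>C x) = c *\<^sub>C g x" for c x
      unfolding g_def cproj_scaleC[OF fd] by (simp add: sc cproj_in[OF fd])
  qed
  thus ?thesis using gf by (metis image_cong)
qed

lemma fin_spectrum_eigenvector:
  fixes T :: "'a::complex_inner \<Rightarrow> 'a"
  assumes fd: "cfinite_dim V" and z: "z \<in> fin_spectrum V T" and TV: "\<And>x. x \<in> V \<Longrightarrow> T x \<in> V"
    and add: "\<And>x y. x \<in> V \<Longrightarrow> y \<in> V \<Longrightarrow> T (x + y) = T x + T y"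
    and sc: "\<And>c x. x \<in> V \<Longrightarrow> T (c *\<^sub>C x) = c *\<^sub>C T x"
  obtains x where "x \<in> V" "x \<noteq> 0" "T x = z *\<^sub>C x"
proof -
  have sV: "cvs.subspace V" by (rule cfinite_dim_subspace[OF fd])
  define f where "f x = T x - z *\<^sub>C x" for x
  have fadd: "f (x + y) = f x + f y" if "x \<in> V" "y \<in> V" for x y
    unfolding f_def using add[OF that] by (simp add: scaleC_add_right)
  have fsc: "f (c *\<^sub>C x) = c *\<^sub>C f x" if "x \<in> V" for c x
    unfolding f_def using sc[OF that] by (simp add: cvs.scale_right_diff_distrib scaleC_scaleC mult.commute)
  have fV: "f ` V \<subseteq> V"
    unfolding f_def using TV sV by (auto simp: cvs.subspace_diff cvs.subspace_scale)
  show ?thesis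
  proof (rule ccontr)
    assume no: "\<not> ?thesis"
    have "inj_on f V"
    proof (rule inj_onI)
      fix x y assume xy: "x \<in> V" "y \<in> V" "f x = f y"
      have "f (x - y) = 0" using fadd[of "x - y" y] xy sV by (simp add: cvs.subspace_diff)
      moreover have "x - y \<in> V" using xy sV by (simp add: cvs.subspace_diff)
      ultimately have "x - y = 0" using no that[of "x - y"] by (auto simp: f_def)
      thus "x = y" by simp
    qed
    with linear_on_inj_on_imp_surj_on[OF fd fV _ fadd fsc] have "bij_betw f V V"
      by (simp add: bij_betw_def)
    thus False using z unfolding fin_spectrum_def f_def by simp
  qed
qed

section \<open>Projections onto closed subspaces\<close>

lemma minimizing_seq_Cauchy:
  fixes M :: "'a::complex_inner set"
  assumes dle: "\<And>y. y \<in> M \<Longrightarrow> d \<le> norm (v - y)" and d0: "d \<ge> 0"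
    and mid: "\<And>a b. a \<in> M \<Longrightarrow> b \<in> M \<Longrightarrow> (1/2::complex) *\<^sub>C (a + b) \<in> M"
    and y: "\<And>n. y n \<in> M" "\<And>n. (norm (v - y n))^2 < d^2 + 1 / real (Suc n)"
  shows "Cauchy y"
proof -
  have yy: "(norm (y n - y m))^2 \<le> 2 / real (Suc n) + 2 / real (Suc m)" for n m
  proof -
    have "d^2 \<le> (norm (v - (1/2::complex) *\<^sub>C (y n + y m)))^2"
      using dle[OF mid[OF y(1) y(1)]] d0 by (simp add: power_mono)
    moreover have "(v - y n) + (v - y m) = (2::complex) *\<^sub>C (v - (1/2::complex) *\<^sub>C (y n + y m))"
      by (simp add: cvs.scale_right_diff_distrib scaleC_scaleC scaleC_add_right scaleC_2)
    hence "(norm ((v - y n) + (v - y m)))^2 = 4 * (norm (v - (1/2::complex) *\<^sub>C (y n + y m)))^2"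
      by (simp add: norm_scaleC power_mult_distrib)
    moreover have "(norm ((v - y n) + (v - y m)))^2 + (norm (y m - y n))^2
        = 2 * (norm (v - y n))^2 + 2 * (norm (v - y m))^2"
      using parallelogram_law[of "v - y n" "v - y m"] by simp
    ultimately show ?thesis using y(2)[of n] y(2)[of m] by (simp add: norm_minus_commute)
  qed
  show "Cauchy y"
  proof (rule metric_CauchyI)
    fix e :: real assume e: "e > 0"
    obtain N :: nat where N: "4 / e^2 < real N" using reals_Archimedean2 by blast
    have "4 / e^2 > 0" using e by simp
    hence Npos: "real N > 0" using N by linarith
    show "\<exists>M. \<forall>m\<ge>M. \<forall>n\<ge>M. dist (y m) (y n) < e"
    proof (intro exI allI impI)
      fix m n assume mn: "m \<ge> N" "n \<ge> N"
      have "2 / real (Suc m) \<le> 2 / real N" "2 / real (Suc n) \<le> 2 / real N"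
        using mn Npos by (auto intro: divide_left_mono)
      hence "(dist (y m) (y n))^2 \<le> 4 / real N" using yy[of m n] by (simp add: dist_norm)
      also have "\<dots> < e^2" using N e Npos by (simp add: field_simps)
      finally show "dist (y m) (y n) < e" using e by (simp add: power_less_imp_less_base)
    qed
  qed
qed

lemma closed_csubspace_nearest_point:
  fixes M :: "'a::{complex_inner, complete_space} set"
  assumes sub: "csubspace M" and cl: "closed M"
  obtains w where "w \<in> M" "\<And>y. y \<in> M \<Longrightarrow> norm (v - w) \<le> norm (v - y)"
proof -
  have M0: "0 \<in> M" and Madd: "\<And>x y. x \<in> M \<Longrightarrow> y \<in> M \<Longrightarrow> x + y \<in> M"
    and Msc: "\<And>c x. x \<in> M \<Longrightarrow> c *\<^sub>C x \<in> M" using sub unfolding csubspace_def by auto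
  define d where "d = (INF y\<in>M. norm (v - y))"
  have bdd: "bdd_below ((\<lambda>y. norm (v - y)) ` M)" by (rule bdd_belowI[of _ 0]) auto
  have dle: "d \<le> norm (v - y)" if "y \<in> M" for y
    unfolding d_def using bdd that by (rule cINF_lower)
  have d0: "d \<ge> 0" unfolding d_def using M0 by (intro cINF_greatest) auto
  have "\<exists>y\<in>M. (norm (v - y))^2 < d^2 + 1 / real (Suc n)" for n
  proof -
    have "d < sqrt (d^2 + 1 / real (Suc n))" by (rule real_less_rsqrt) simp
    then obtain y where y: "y \<in> M" "norm (v - y) < sqrt (d^2 + 1 / real (Suc n))"
      using cINF_less_iff[OF _ bdd] M0 unfolding d_def by blast
    hence "(norm (v - y))^2 < (sqrt (d^2 + 1 / real (Suc n)))^2"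
      by (intro power_strict_mono) auto
    hence "(norm (v - y))^2 < d^2 + 1 / real (Suc n)" by simp
    thus ?thesis using y by blast
  qed
  then obtain y where y: "\<And>n. y n \<in> M" "\<And>n. (norm (v - y n))^2 < d^2 + 1 / real (Suc n)"
    by metis
  have "Cauchy y" using Madd Msc by (intro minimizing_seq_Cauchy[OF dle d0 _ y]) auto
  then obtain w where w: "y \<longlonglongrightarrow> w" using Cauchy_convergent_iff convergent_def by blast
  have "(\<lambda>n. (norm (v - y n))^2) \<longlonglongrightarrow> (norm (v - w))^2" by (intro tendsto_intros w)
  moreover have "(\<lambda>n. d^2 + 1 / real (Suc n)) \<longlonglongrightarrow> d^2 + 0"
    by (intro tendsto_intros) (rule LIMSEQ_Suc[OF lim_inverse_n'[unfolded inverse_eq_divide]])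
  ultimately have "(norm (v - w))^2 \<le> d^2" using y(2) by (auto intro: LIMSEQ_le less_imp_le)
  hence wd: "norm (v - w) \<le> d" by (rule power2_le_imp_le[OF _ d0])
  show ?thesis
  proof (rule that)
    show "w \<in> M" using cl w y(1) closed_sequential_limits by blast
    show "norm (v - w) \<le> norm (v - y)" if "y \<in> M" for y using wd dle[OF that] by linarith
  qed
qed

lemma nearest_point_orthogonal:
  assumes sub: "csubspace M" and w: "w \<in> M" and near: "\<And>y. y \<in> M \<Longrightarrow> norm (v - w) \<le> norm (v - y)"
    and z: "z \<in> M"
  shows "cinner z (v - w) = 0"
proof (cases "z = 0")
  case False
  define c where "c = cinner z (v - w) / complex_of_real ((norm z)^2)"
  have "w + c *\<^sub>C z \<in> M" using w z sub unfolding csubspace_def by blast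
  hence "(norm (v - w))^2 \<le> (norm ((v - w) - c *\<^sub>C z))^2"
    using near by (simp add: power_mono diff_diff_eq)
  also have "\<dots> = (norm (v - w))^2 - (cmod (cinner z (v - w)))^2 / (norm z)^2"
    unfolding c_def by (rule norm_diff_proj_line_squared[OF False])
  finally have "(cmod (cinner z (v - w)))^2 \<le> 0" using False by (simp add: divide_le_0_iff)
  thus ?thesis by simp
qed simp

lemma closed_csubspace_orthogonal_projection:
  fixes M :: "'a::{complex_inner, complete_space} set"
  assumes "csubspace M" "closed M"
  obtains w where "w \<in> M" "\<And>y. y \<in> M \<Longrightarrow> cinner y (v - w) = 0"
proof -
  obtain w where "w \<in> M" "\<And>y. y \<in> M \<Longrightarrow> norm (v - w) \<le> norm (v - y)"
    using closed_csubspace_nearest_point[OF assms, of v] by blast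
  thus ?thesis using that nearest_point_orthogonal[OF assms(1)] by blast
qed

lemma closed_kernel_if_bounded:
  fixes \<phi> :: "'a::real_normed_vector \<Rightarrow> complex"
  assumes add: "\<And>x y. \<phi> (x + y) = \<phi> x + \<phi> y" and bd: "\<And>x. cmod (\<phi> x) \<le> K * norm x"
  shows "closed {x. \<phi> x = 0}"
  unfolding closed_sequential_limits
proof (intro allI impI)
  fix s l assume a: "(\<forall>n. s n \<in> {x. \<phi> x = 0}) \<and> s \<longlonglongrightarrow> l"
  have "\<phi> (l - s n) = \<phi> l" for n using add[of "l - s n" "s n"] a by simp
  hence b: "cmod (\<phi> l) \<le> K * norm (l - s n)" for n using bd[of "l - s n"] by simp
  have "(\<lambda>n. K * norm (l - s n)) \<longlonglongrightarrow> K * norm (l - l)"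
    using a by (intro tendsto_intros) auto
  hence "cmod (\<phi> l) \<le> K * norm (l - l)" using b by (intro LIMSEQ_le_const) auto
  thus "l \<in> {x. \<phi> x = 0}" by simp
qed

lemma riesz_representation:
  fixes \<phi> :: "'a::{complex_inner, complete_space} \<Rightarrow> complex"
  assumes add: "\<And>x y. \<phi> (x + y) = \<phi> x + \<phi> y" and sc: "\<And>c x. \<phi> (c *\<^sub>C x) = cnj c * \<phi> x"
    and bd: "\<And>x. cmod (\<phi> x) \<le> K * norm x"
  shows "\<exists>z. \<forall>y. \<phi> y = cinner y z"
proof (cases "\<forall>y. \<phi> y = 0")
  case False
  have \<phi>0: "\<phi> 0 = 0" using add[of 0 0] by simp
  have \<phi>diff: "\<phi> (x - y) = \<phi> x - \<phi> y" for x y using add[of "x - y" y] by simp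
  define Ker where "Ker = {x. \<phi> x = 0}"
  have "csubspace Ker" unfolding csubspace_def Ker_def using \<phi>0 add sc by auto
  moreover have "closed Ker" unfolding Ker_def by (rule closed_kernel_if_bounded[OF add bd])
  moreover obtain v where v: "\<phi> v \<noteq> 0" using False by blast
  ultimately obtain w where w: "w \<in> Ker" "\<And>k. k \<in> Ker \<Longrightarrow> cinner k (v - w) = 0"
    using closed_csubspace_orthogonal_projection by metis
  \<comment> \<open>\<open>h\<close> spans the orthogonal complement of the kernel\<close>
  define h where "h = v - w"
  have \<phi>h: "\<phi> h = \<phi> v" using w(1) \<phi>diff by (simp add: h_def Ker_def)
  hence h0: "h \<noteq> 0" using v \<phi>0 by auto
  define z where "z = (\<phi> h / complex_of_real ((norm h)^2)) *\<^sub>C h"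
  have "\<phi> y = cinner y z" for y
  proof -
    define c where "c = cnj (\<phi> y / \<phi> h)"
    have "\<phi> (y - c *\<^sub>C h) = 0" using v \<phi>h by (simp add: \<phi>diff sc c_def)
    hence "cinner (y - c *\<^sub>C h) h = 0" using w(2) unfolding Ker_def h_def by blast
    hence "cinner y h = cnj c * cinner h h" by (simp add: cinner_diff_left cinner_scaleC_left)
    hence "cinner y h = (\<phi> y / \<phi> h) * complex_of_real ((norm h)^2)" by (simp add: c_def cinner_self)
    thus "\<phi> y = cinner y z" using h0 v \<phi>h by (simp add: z_def cinner_scaleC_right)
  qed
  thus ?thesis by blast
qed (intro exI[of _ 0], simp)

section \<open>Weak convergence\<close>

lemma bounded_seq_inner_convergent_subseq:
  fixes x :: "nat \<Rightarrow> 'a::complex_inner" and c :: "nat \<Rightarrow> 'a"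
  assumes bd: "\<And>k. norm (x k) \<le> B"
  obtains r where "strict_mono r" "\<And>i. convergent (\<lambda>k. cinner (c i) (x (r k)))"
proof -
  interpret ss: subseqs "\<lambda>i s. convergent (\<lambda>k. cinner (c i) (x (s k)))"
  proof
    fix n and s :: "nat \<Rightarrow> nat" assume "strict_mono s"
    define f where "f k = cinner (c n) (x (s k))" for k
    have "norm (f k) \<le> norm (c n) * B" for k
      using Cauchy_Schwarz[of "c n" "x (s k)"] mult_left_mono[OF bd[of "s k"] norm_ge_zero[of "c n"]]
      by (simp add: f_def)
    hence "bounded (range f)" unfolding bounded_iff by blast
    then obtain l r where "strict_mono r" "(f \<circ> r) \<longlonglongrightarrow> l"
      using bounded_imp_convergent_subsequence by blast
    thus "\<exists>r'. strict_mono r' \<and> convergent (\<lambda>k. cinner (c n) (x ((s \<circ> r') k)))"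
      by (intro exI[of _ r]) (auto simp: convergent_def f_def o_def)
  qed
  show ?thesis
  proof (rule that[OF ss.subseq_diagseq])
    fix i
    have "convergent (\<lambda>k. cinner (c i) (x ((ss.diagseq \<circ> (+) (Suc i)) k)))"
    proof (rule ss.diagseq_holds)
      fix r' :: "nat \<Rightarrow> nat" and s n
      assume "strict_mono r'" "convergent (\<lambda>k. cinner (c n) (x (s k)))"
      thus "convergent (\<lambda>k. cinner (c n) (x ((s \<circ> r') k)))"
        using convergent_subseq_convergent[of "\<lambda>k. cinner (c n) (x (s k))" r'] by (simp add: o_def)
    qed
    hence "convergent (\<lambda>k. cinner (c i) (x (ss.diagseq (k + Suc i))))"
      by (simp add: o_def add.commute)
    thus "convergent (\<lambda>k. cinner (c i) (x (ss.diagseq k)))"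
      using convergent_ignore_initial_segment[of "\<lambda>k. cinner (c i) (x (ss.diagseq k))" "Suc i"] by simp
  qed
qed

lemma dense_approx_inner_bound:
  fixes x :: "nat \<Rightarrow> 'a::complex_inner"
  assumes bd: "\<And>k. norm (x k) \<le> B" and dense: "closure C = UNIV" and e: "e > 0"
  obtains c where "c \<in> C" "\<And>k. cmod (cinner y (x k) - cinner c (x k)) < e"
proof -
  have B0: "B \<ge> 0" using bd[of 0] norm_ge_zero order_trans by blast
  have "y \<in> closure C" using dense by simp
  moreover have "e / (B + 1) > 0" using e B0 by simp
  ultimately obtain c where c: "c \<in> C" "dist c y < e / (B + 1)"
    unfolding closure_approachable by blast
  show ?thesis
  proof (rule that[OF c(1)])
    fix k
    have "cmod (cinner y (x k) - cinner c (x k)) \<le> norm (y - c) * B"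
      using Cauchy_Schwarz[of "y - c" "x k"] mult_left_mono[OF bd[of k] norm_ge_zero[of "y - c"]]
      by (simp add: cinner_diff_left)
    also have "\<dots> \<le> norm (y - c) * (B + 1)" by (simp add: mult_left_mono)
    also have "\<dots> < e / (B + 1) * (B + 1)"
      using c(2) B0 by (intro mult_strict_right_mono) (auto simp: dist_norm norm_minus_commute)
    finally show "cmod (cinner y (x k) - cinner c (x k)) < e" using B0 by simp
  qed
qed

lemma inner_convergent_if_dense:
  fixes x :: "nat \<Rightarrow> 'a::complex_inner"
  assumes bd: "\<And>k. norm (x k) \<le> B" and dense: "closure C = UNIV"
    and conv: "\<And>c. c \<in> C \<Longrightarrow> convergent (\<lambda>k. cinner c (x k))"
  shows "convergent (\<lambda>k. cinner y (x k))"
  unfolding Cauchy_convergent_iff[symmetric]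
proof (rule metric_CauchyI)
  fix e :: real assume e: "e > 0"
  obtain c where c: "c \<in> C" "\<And>k. cmod (cinner y (x k) - cinner c (x k)) < e / 3"
    using dense_approx_inner_bound[where x = x and e = "e / 3" and y = y, OF bd dense] e by auto
  obtain M where M: "\<And>m n. m \<ge> M \<Longrightarrow> n \<ge> M \<Longrightarrow> dist (cinner c (x m)) (cinner c (x n)) < e / 3"
    using conv[OF c(1)] e unfolding Cauchy_convergent_iff[symmetric] Cauchy_def
    by (meson divide_pos_pos zero_less_numeral)
  have "dist (cinner y (x m)) (cinner y (x n)) < e" if "m \<ge> M" "n \<ge> M" for m n
  proof -
    have "dist (cinner y (x m)) (cinner y (x n)) \<le> cmod (cinner y (x m) - cinner c (x m))
        + dist (cinner c (x m)) (cinner c (x n)) + cmod (cinner y (x n) - cinner c (x n))"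
      unfolding dist_norm
      using norm_triangle_ineq4[of "(cinner y (x m) - cinner c (x m)) + (cinner c (x m) - cinner c (x n))"
          "cinner y (x n) - cinner c (x n)"]
        norm_triangle_ineq[of "cinner y (x m) - cinner c (x m)" "cinner c (x m) - cinner c (x n)"]
      by (simp add: algebra_simps)
    thus ?thesis using c(2)[of m] c(2)[of n] M[OF that] by linarith
  qed
  thus "\<exists>M. \<forall>m\<ge>M. \<forall>n\<ge>M. dist (cinner y (x m)) (cinner y (x n)) < e" by blast
qed

lemma inner_convergent_imp_weakly_convergent:
  fixes x :: "nat \<Rightarrow> 'a::{complex_inner, complete_space}"
  assumes bd: "\<And>k. norm (x k) \<le> B" and conv: "\<And>y. convergent (\<lambda>k. cinner y (x k))"
  obtains a where "weakly_to x a"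
proof -
  define \<phi> where "\<phi> y = lim (\<lambda>k. cinner y (x k))" for y
  have L: "(\<lambda>k. cinner y (x k)) \<longlonglongrightarrow> \<phi> y" for y
    using conv[of y] by (simp add: \<phi>_def convergent_LIMSEQ_iff)
  have "\<phi> (y + z) = \<phi> y + \<phi> z" for y z
    by (rule LIMSEQ_unique[OF L]) (unfold cinner_add_left, intro tendsto_add L)
  moreover have "\<phi> (c *\<^sub>C y) = cnj c * \<phi> y" for c y
    by (rule LIMSEQ_unique[OF L]) (unfold cinner_scaleC_left, intro tendsto_mult tendsto_const L)
  moreover have "cmod (\<phi> y) \<le> B * norm y" for y
  proof (rule LIMSEQ_le_const2)
    show "(\<lambda>k. cmod (cinner y (x k))) \<longlonglongrightarrow> cmod (\<phi> y)" by (intro tendsto_intros L)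
    show "\<exists>N. \<forall>n\<ge>N. cmod (cinner y (x n)) \<le> B * norm y"
      using Cauchy_Schwarz[of y] mult_left_mono[OF bd norm_ge_zero[of y]] by (metis mult.commute order_trans)
  qed
  ultimately obtain a where "\<And>y. \<phi> y = cinner y a" using riesz_representation by metis
  thus ?thesis using that L unfolding weakly_to_def by metis
qed

lemma bounded_seq_weakly_convergent_subseq:
  fixes x :: "nat \<Rightarrow> 'a::{complex_inner, complete_space}"
  assumes sep: "separable_space TYPE('a)" and bd: "\<And>k. norm (x k) \<le> B"
  obtains r a where "strict_mono r" "weakly_to (x \<circ> r) a"
proof -
  obtain C :: "'a set" where C: "countable C" "closure C = UNIV"
    using sep unfolding separable_space_def by blast
  hence "C \<noteq> {}" by auto
  hence rc: "range (from_nat_into C) = C" using C(1) by simp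
  obtain r where r: "strict_mono r" "\<And>i. convergent (\<lambda>k. cinner (from_nat_into C i) (x (r k)))"
    using bounded_seq_inner_convergent_subseq[where x = x and c = "from_nat_into C", OF bd] by blast
  have bdr: "norm ((x \<circ> r) k) \<le> B" for k using bd by simp
  have "convergent (\<lambda>k. cinner y ((x \<circ> r) k))" for y
  proof (rule inner_convergent_if_dense[where x = "x \<circ> r", OF bdr C(2)])
    fix c assume "c \<in> C"
    then obtain i where "c = from_nat_into C i" using rc by blast
    thus "convergent (\<lambda>k. cinner c ((x \<circ> r) k))" using r(2)[of i] by (simp add: o_def)
  qed
  then obtain a where "weakly_to (x \<circ> r) a"
    using inner_convergent_imp_weakly_convergent[where x = "x \<circ> r", OF bdr] by blast
  thus ?thesis using that r(1) by blast
qed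

lemma weakly_to_0_if_dense:
  fixes x :: "nat \<Rightarrow> 'a::complex_inner"
  assumes bd: "\<And>k. norm (x k) \<le> B" and dense: "closure C = UNIV"
    and null: "\<And>c. c \<in> C \<Longrightarrow> (\<lambda>k. cinner c (x k)) \<longlonglongrightarrow> 0"
  shows "weakly_to x 0"
  unfolding weakly_to_def
proof (intro allI LIMSEQ_I)
  fix y and e :: real assume e: "e > 0"
  obtain c where c: "c \<in> C" "\<And>k. cmod (cinner y (x k) - cinner c (x k)) < e / 2"
    using dense_approx_inner_bound[where x = x and e = "e / 2" and y = y, OF bd dense] e by auto
  obtain N where N: "\<And>k. k \<ge> N \<Longrightarrow> cmod (cinner c (x k)) < e / 2"
    using LIMSEQ_D[OF null[OF c(1)], of "e / 2"] e by auto
  have "norm (cinner y (x k) - cinner y 0) < e" if "k \<ge> N" for k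
    using norm_triangle_ineq[of "cinner y (x k) - cinner c (x k)" "cinner c (x k)"] c(2)[of k] N[OF that]
    by simp
  thus "\<exists>N. \<forall>k\<ge>N. norm (cinner y (x k) - cinner y 0) < e" by blast
qed

lemma weakly_to_if_tendsto_diff:
  assumes "(\<lambda>n. x n - y n) \<longlonglongrightarrow> 0" "weakly_to y a" shows "weakly_to x a"
  unfolding weakly_to_def
proof
  fix w
  have "(\<lambda>n. cinner w (x n - y n) + cinner w (y n)) \<longlonglongrightarrow> cinner w 0 + cinner w a"
    using assms(2) unfolding weakly_to_def by (intro tendsto_add tendsto_cinner_right[OF assms(1)]) auto
  thus "(\<lambda>n. cinner w (x n)) \<longlonglongrightarrow> cinner w a" by (simp add: cinner_diff_right)
qed

lemma tendsto_cinner_strong_weak: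
  fixes x :: "nat \<Rightarrow> 'a::complex_inner"
  assumes a: "a \<longlonglongrightarrow> b" and w: "weakly_to x w" and n: "\<And>k. norm (x k) = 1"
  shows "(\<lambda>k. cinner (a k) (x k)) \<longlonglongrightarrow> cinner b w"
proof -
  have "(\<lambda>k. cinner (a k - b) (x k)) \<longlonglongrightarrow> 0"
  proof (rule Lim_null_comparison)
    show "\<forall>\<^sub>F k in sequentially. norm (cinner (a k - b) (x k)) \<le> norm (a k - b)"
      using Cauchy_Schwarz[of "a k - b" "x k" for k] n by simp
    show "(\<lambda>k. norm (a k - b)) \<longlonglongrightarrow> 0" using a by (simp add: tendsto_norm_zero_iff LIM_zero_iff)
  qed
  moreover have "(\<lambda>k. cinner b (x k)) \<longlonglongrightarrow> cinner b w" using w unfolding weakly_to_def by blast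
  ultimately have "(\<lambda>k. cinner (a k - b) (x k) + cinner b (x k)) \<longlonglongrightarrow> 0 + cinner b w"
    by (rule tendsto_add)
  thus ?thesis by (simp add: cinner_diff_left)
qed

lemma orthonormal_seq_weakly_to_0:
  fixes e :: "nat \<Rightarrow> 'a::complex_inner"
  assumes n1: "\<And>k. norm (e k) = 1" and orth: "\<And>j k. j \<noteq> k \<Longrightarrow> cinner (e j) (e k) = 0"
  shows "weakly_to e 0"
  unfolding weakly_to_def
proof
  fix y
  have inj: "inj e"
  proof (rule injI)
    fix j k assume "e j = e k"
    thus "j = k" using orth[of j k] n1[of k] cinner_self_norm1[of "e k"] by (cases "j = k") auto
  qed
  define f where "f k = (cmod (cinner (e k) y))^2" for k
  have ortho: "orthonormal (e ` {..<N})" for N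
    unfolding orthonormal_def using n1 by (auto intro: orth)
  have "sum f {..<N} \<le> (norm y)^2" for N
  proof -
    have "sum f {..<N} = (\<Sum>x\<in>e ` {..<N}. (cmod (cinner x y))^2)"
      unfolding f_def by (subst sum.reindex) (use inj in \<open>auto simp: inj_on_def\<close>)
    also have "\<dots> \<le> (norm y)^2" by (rule bessel_inequality[OF _ ortho]) simp
    finally show ?thesis .
  qed
  hence "summable f" by (intro summableI_nonneg_bounded[of f]) (auto simp: f_def)
  hence "f \<longlonglongrightarrow> 0" by (rule summable_LIMSEQ_zero)
  hence "(\<lambda>k. sqrt (f k)) \<longlonglongrightarrow> sqrt 0" by (intro tendsto_real_sqrt)
  hence "(\<lambda>k. norm (cinner y (e k))) \<longlonglongrightarrow> 0"
    by (simp add: f_def cinner_commute[of y])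
  thus "(\<lambda>k. cinner y (e k)) \<longlonglongrightarrow> cinner y 0" by (simp add: tendsto_norm_zero_iff)
qed

lemma orthonormal_Union_chain:
  assumes "\<And>X. X \<in> C \<Longrightarrow> orthonormal X" "\<And>X Y. X \<in> C \<Longrightarrow> Y \<in> C \<Longrightarrow> X \<subseteq> Y \<or> Y \<subseteq> X"
  shows "orthonormal (\<Union>C)"
  unfolding orthonormal_def
proof (intro conjI ballI impI)
  fix e assume "e \<in> \<Union>C"
  then obtain X where "e \<in> X" "X \<in> C" by blast
  thus "norm e = 1" using assms(1) unfolding orthonormal_def by blast
next
  fix e f assume ef: "e \<in> \<Union>C" "f \<in> \<Union>C" "e \<noteq> f"
  then obtain X Y where XY: "e \<in> X" "X \<in> C" "f \<in> Y" "Y \<in> C" by blast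
  then obtain Z where "Z \<in> C" "e \<in> Z" "f \<in> Z" using assms(2)[OF XY(2,4)] by blast
  thus "cinner e f = 0" using assms(1) ef(3) unfolding orthonormal_def by blast
qed

lemma infinite_orthonormal_subset:
  fixes E :: "'a::complex_inner set"
  assumes sub: "csubspace E" and inf: "\<not> cfinite_dim E"
  obtains S where "S \<subseteq> E" "orthonormal S" "infinite S"
proof -
  let ?O = "{S. S \<subseteq> E \<and> orthonormal S}"
  have "\<Union>C \<in> ?O" if "C \<in> chains ?O" for C
    using that orthonormal_Union_chain[of C] unfolding chains_def chain_subset_def by blast
  then obtain M where "M \<in> ?O" and max: "\<And>X. X \<in> ?O \<Longrightarrow> M \<subseteq> X \<Longrightarrow> X = M"
    using Zorn_Lemma[of ?O] by auto
  hence M: "M \<subseteq> E" "orthonormal M" by auto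
  have "infinite M"
  proof
    assume fin: "finite M"
    have sE: "cvs.subspace E" using sub csubspace_eq by blast
    have "cvs.span M \<subseteq> E" using cvs.span_minimal[OF M(1) sE] .
    moreover have "cvs.span M \<noteq> E" using inf fin unfolding cfinite_dim_def cspan_eq by blast
    ultimately obtain b where b: "b \<in> E" "b \<notin> cvs.span M" by blast
    then obtain e where e: "norm e = 1" "\<And>f. f \<in> M \<Longrightarrow> cinner f e = 0"
      "cvs.span (insert e M) = cvs.span (insert b M)"
      using orthonormal_extend[OF fin M(2) b(2)] by blast
    have "e \<in> E"
      using e(3) cvs.span_superset[of "insert e M"] cvs.span_minimal[of "insert b M" E] b(1) M(1) sE
      by blast
    hence "insert e M = M" using max[of "insert e M"] orthonormal_insert[OF M(2) e(1,2)] M(1) by blast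
    hence "cinner e e = 0" using e(2) by blast
    thus False using e(1) by simp
  qed
  thus ?thesis using that M by blast
qed

lemma infinite_dim_orthonormal_seq:
  fixes E :: "'a::complex_inner set"
  assumes "csubspace E" "\<not> cfinite_dim E"
  obtains e :: "nat \<Rightarrow> 'a" where "\<And>k. e k \<in> E" "\<And>k. norm (e k) = 1"
    "\<And>j k. j \<noteq> k \<Longrightarrow> cinner (e j) (e k) = 0"
proof -
  obtain S where S: "S \<subseteq> E" "orthonormal S" "infinite S"
    using infinite_orthonormal_subset[OF assms] .
  then obtain e :: "nat \<Rightarrow> 'a" where e: "inj e" "range e \<subseteq> S"
    using infinite_countable_subset by blast
  show ?thesis
  proof (rule that)
    show "e k \<in> E" for k using e(2) S(1) by blast
    show "norm (e k) = 1" for k using e(2) S(2) unfolding orthonormal_def by blast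
    show "cinner (e j) (e k) = 0" if "j \<noteq> k" for j k
    proof -
      have "e j \<noteq> e k" using e(1) that by (simp add: inj_eq)
      thus ?thesis using e(2) S(2) unfolding orthonormal_def by blast
    qed
  qed
qed

section \<open>Selfadjoint operators\<close>

definition weyl_sequence :: "'a::complex_inner set \<Rightarrow> ('a \<Rightarrow> 'a) \<Rightarrow> real \<Rightarrow> (nat \<Rightarrow> 'a) \<Rightarrow> bool" where
  "weyl_sequence D A t u \<longleftrightarrow> (\<forall>k. u k \<in> D \<and> norm (u k) = 1) \<and> weakly_to u 0 \<and>
      (\<lambda>k. A (u k) - complex_of_real t *\<^sub>C u k) \<longlonglongrightarrow> 0"

locale selfadjoint_op =
  fixes D :: "'a::{complex_inner, complete_space} set" and A :: "'a \<Rightarrow> 'a"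
  assumes selfadjoint: "selfadjoint D A"
begin

lemma csubspace_domain: "csubspace D"
  using selfadjoint unfolding selfadjoint_def by blast

lemma A_add: "x \<in> D \<Longrightarrow> y \<in> D \<Longrightarrow> A (x + y) = A x + A y"
  using selfadjoint unfolding selfadjoint_def by blast

lemma A_scaleC: "x \<in> D \<Longrightarrow> A (c *\<^sub>C x) = c *\<^sub>C A x"
  using selfadjoint unfolding selfadjoint_def by blast

lemma symmetric: "x \<in> D \<Longrightarrow> y \<in> D \<Longrightarrow> cinner (A x) y = cinner x (A y)"
  using selfadjoint unfolding selfadjoint_def by blast

lemma adjoint_domain: "(\<And>x. x \<in> D \<Longrightarrow> cinner y (A x) = cinner z x) \<Longrightarrow> y \<in> D \<and> A y = z"
  using selfadjoint unfolding selfadjoint_def by blast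

lemma zero_in_domain: "0 \<in> D"
  using csubspace_domain unfolding csubspace_def by blast

lemma add_in_domain: "x \<in> D \<Longrightarrow> y \<in> D \<Longrightarrow> x + y \<in> D"
  using csubspace_domain unfolding csubspace_def by blast

lemma scaleC_in_domain: "x \<in> D \<Longrightarrow> c *\<^sub>C x \<in> D"
  using csubspace_domain unfolding csubspace_def by blast

lemma diff_in_domain: "x \<in> D \<Longrightarrow> y \<in> D \<Longrightarrow> x - y \<in> D"
  using csubspace_domain csubspace_eq cvs.subspace_diff by blast

lemma A_zero: "A 0 = 0"
  using A_add[OF zero_in_domain zero_in_domain] by simp

lemma A_diff: "x \<in> D \<Longrightarrow> y \<in> D \<Longrightarrow> A (x - y) = A x - A y"
  using A_add[of "x - y" y] diff_in_domain by simp

lemma A_linear_combination: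
  assumes "finite E" "E \<subseteq> D"
  shows "(\<Sum>e\<in>E. c e *\<^sub>C e) \<in> D \<and> A (\<Sum>e\<in>E. c e *\<^sub>C e) = (\<Sum>e\<in>E. c e *\<^sub>C A e)"
  using assms
proof (induction E rule: finite_induct)
  case (insert a F)
  hence "c a *\<^sub>C a \<in> D" "(\<Sum>e\<in>F. c e *\<^sub>C e) \<in> D" by (auto intro: scaleC_in_domain)
  thus ?case using insert by (simp add: A_add add_in_domain A_scaleC)
qed (simp add: zero_in_domain A_zero)

lemma eigenspace_csubspace: "csubspace {x \<in> D. A x = c *\<^sub>C x}"
  unfolding csubspace_def using zero_in_domain A_zero add_in_domain A_add scaleC_in_domain A_scaleC
  by (auto simp: scaleC_add_right scaleC_scaleC mult.commute)

lemma eigenvector_if_form: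
  assumes "\<And>f. f \<in> D \<Longrightarrow> cinner (A f) x = complex_of_real t * cinner f x"
  shows "x \<in> D \<and> A x = complex_of_real t *\<^sub>C x"
proof (rule adjoint_domain)
  fix f assume f: "f \<in> D"
  have "cinner x (A f) = cnj (cinner (A f) x)" by (simp add: cinner_commute[of x])
  also have "\<dots> = complex_of_real t * cinner x f" using assms[OF f] by (simp add: cinner_commute[of f x])
  finally show "cinner x (A f) = cinner (complex_of_real t *\<^sub>C x) f" by (simp add: cinner_scaleC_left)
qed

lemma Im_cinner_apply_self:
  assumes "x \<in> D" shows "Im (cinner x (A x)) = 0"
proof -
  have "cinner x (A x) = cnj (cinner x (A x))"
    using symmetric[OF assms assms] cinner_commute[of "A x" x] by simp
  hence "Im (cinner x (A x)) = Im (cnj (cinner x (A x)))" by simp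
  thus ?thesis by simp
qed

lemma norm_shift_ge_abs_Im:
  assumes x: "x \<in> D"
  shows "\<bar>Im z\<bar> * norm x \<le> norm (A x - z *\<^sub>C x)"
proof -
  have "cinner x (A x - z *\<^sub>C x) = cinner x (A x) - z * complex_of_real ((norm x)^2)"
    by (simp add: cinner_diff_right cinner_scaleC_right cinner_self)
  hence "\<bar>Im z\<bar> * (norm x)^2 = \<bar>Im (cinner x (A x - z *\<^sub>C x))\<bar>"
    using Im_cinner_apply_self[OF x] by (simp add: abs_mult)
  also have "\<dots> \<le> norm x * norm (A x - z *\<^sub>C x)"
    using abs_Im_le_cmod Cauchy_Schwarz order_trans by blast
  finally have "norm x * (\<bar>Im z\<bar> * norm x) \<le> norm x * norm (A x - z *\<^sub>C x)"
    by (simp add: power2_eq_square mult_ac)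
  thus ?thesis by (cases "x = 0") (auto simp: mult_le_cancel_left)
qed

lemma range_shift_closed:
  assumes c: "c > 0" and bound: "\<And>x. x \<in> D \<Longrightarrow> c * norm x \<le> norm (A x - z *\<^sub>C x)"
  shows "closed ((\<lambda>x. A x - z *\<^sub>C x) ` D)"
  unfolding closed_sequential_limits
proof (intro allI impI)
  define T where "T x = A x - z *\<^sub>C x" for x
  fix s l assume a: "(\<forall>n. s n \<in> T ` D) \<and> s \<longlonglongrightarrow> l"
  hence "\<forall>n. \<exists>y. y \<in> D \<and> s n = T y" by blast
  then obtain x where "\<forall>n. x n \<in> D \<and> s n = T (x n)" by metis
  hence x: "\<And>n. x n \<in> D" "\<And>n. s n = T (x n)" by auto
  have "Cauchy s" using a LIMSEQ_imp_Cauchy by blast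
  have "Cauchy x"
  proof (rule metric_CauchyI)
    fix e :: real assume e: "e > 0"
    then obtain M where M: "\<And>m n. m \<ge> M \<Longrightarrow> n \<ge> M \<Longrightarrow> dist (s m) (s n) < c * e"
      using \<open>Cauchy s\<close> c unfolding Cauchy_def by (meson mult_pos_pos)
    have "dist (x m) (x n) < e" if "m \<ge> M" "n \<ge> M" for m n
    proof -
      have "T (x m) - T (x n) = T (x m - x n)"
        using A_diff[OF x(1) x(1)] by (simp add: T_def cvs.scale_right_diff_distrib)
      hence "c * norm (x m - x n) < c * e"
        using bound[OF diff_in_domain[OF x(1) x(1)], of m n] M[OF that] by (simp add: dist_norm x(2) T_def)
      thus ?thesis using c by (simp add: dist_norm)
    qed
    thus "\<exists>M. \<forall>m\<ge>M. \<forall>n\<ge>M. dist (x m) (x n) < e" by blast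
  qed
  then obtain y where y: "x \<longlonglongrightarrow> y" using Cauchy_convergent_iff convergent_def by blast
  have "y \<in> D \<and> A y = l + z *\<^sub>C y"
  proof (rule adjoint_domain)
    fix f assume f: "f \<in> D"
    have e: "cinner (x n) (A f) = cinner (s n + z *\<^sub>C x n) f" for n
      using symmetric[OF x(1) f, of n] by (simp add: x(2) T_def)
    have "(\<lambda>n. cinner (x n) (A f)) \<longlonglongrightarrow> cinner y (A f)" by (rule tendsto_cinner_left[OF y])
    moreover have "(\<lambda>n. cinner (s n + z *\<^sub>C x n) f) \<longlonglongrightarrow> cinner (l + z *\<^sub>C y) f"
      using a tendsto_add[OF _ tendsto_scaleC[OF y]] by (intro tendsto_cinner_left) auto
    ultimately show "cinner y (A f) = cinner (l + z *\<^sub>C y) f" unfolding e by (rule LIMSEQ_unique)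
  qed
  thus "l \<in> T ` D" unfolding T_def by (intro image_eqI[of _ _ y]) auto
qed

lemma orthogonal_range_shift:
  assumes "\<And>x. x \<in> D \<Longrightarrow> cinner (A x - z *\<^sub>C x) h = 0"
  shows "h \<in> D \<and> A h = cnj z *\<^sub>C h"
proof (rule adjoint_domain)
  fix f assume f: "f \<in> D"
  have "cinner (A f) h = cnj z * cinner f h"
    using assms[OF f] by (simp add: cinner_diff_left cinner_scaleC_left)
  hence "cinner h (A f) = z * cinner h f" by (metis cinner_commute complex_cnj_cnj complex_cnj_mult)
  thus "cinner h (A f) = cinner (cnj z *\<^sub>C h) f" by (simp add: cinner_scaleC_left)
qed

lemma range_shift_csubspace: "csubspace ((\<lambda>x. A x - z *\<^sub>C x) ` D)"
  unfolding csubspace_def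
proof (intro conjI ballI allI)
  show "0 \<in> (\<lambda>x. A x - z *\<^sub>C x) ` D" using zero_in_domain A_zero by (auto intro!: image_eqI[of _ _ 0])
next
  fix a b assume "a \<in> (\<lambda>x. A x - z *\<^sub>C x) ` D" "b \<in> (\<lambda>x. A x - z *\<^sub>C x) ` D"
  then obtain x y where "x \<in> D" "y \<in> D" "a = A x - z *\<^sub>C x" "b = A y - z *\<^sub>C y" by blast
  thus "a + b \<in> (\<lambda>x. A x - z *\<^sub>C x) ` D"
    by (intro image_eqI[of _ _ "x + y"]) (auto simp: A_add add_in_domain scaleC_add_right)
next
  fix a and k :: complex assume "a \<in> (\<lambda>x. A x - z *\<^sub>C x) ` D"
  then obtain x where "x \<in> D" "a = A x - z *\<^sub>C x" by blast
  thus "k *\<^sub>C a \<in> (\<lambda>x. A x - z *\<^sub>C x) ` D"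
    by (intro image_eqI[of _ _ "k *\<^sub>C x"])
       (auto simp: A_scaleC scaleC_in_domain cvs.scale_right_diff_distrib scaleC_scaleC mult.commute)
qed

lemma bij_betw_shift_if_bounded_below:
  assumes c: "c > 0" and bound: "\<And>x. x \<in> D \<Longrightarrow> c * norm x \<le> norm (A x - z *\<^sub>C x)"
    and ker: "\<And>x. x \<in> D \<Longrightarrow> A x = cnj z *\<^sub>C x \<Longrightarrow> x = 0"
  shows "bij_betw (\<lambda>x. A x - z *\<^sub>C x) D UNIV"
proof -
  define T where "T x = A x - z *\<^sub>C x" for x
  have "inj_on T D"
  proof (rule inj_onI)
    fix x y assume xy: "x \<in> D" "y \<in> D" "T x = T y"
    have "T (x - y) = T x - T y"
      unfolding T_def using A_diff[OF xy(1,2)] by (simp add: cvs.scale_right_diff_distrib)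
    hence "c * norm (x - y) \<le> 0"
      using bound[OF diff_in_domain[OF xy(1,2)]] xy(3) by (simp add: T_def)
    thus "x = y" using c by (simp add: mult_le_0_iff)
  qed
  \<comment> \<open>the range is closed and its orthogonal complement is the kernel of \<open>A - cnj z\<close>\<close>
  moreover have "T ` D = UNIV"
  proof (rule ccontr)
    assume "T ` D \<noteq> UNIV"
    then obtain v where v: "v \<notin> T ` D" by blast
    obtain w where w: "w \<in> T ` D" "\<And>y. y \<in> T ` D \<Longrightarrow> cinner y (v - w) = 0"
      using closed_csubspace_orthogonal_projection[of "T ` D" v] range_shift_csubspace
        range_shift_closed[OF c bound] unfolding T_def by blast
    have "v - w \<in> D \<and> A (v - w) = cnj z *\<^sub>C (v - w)"
      using w(2) by (intro orthogonal_range_shift) (auto simp: T_def)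
    hence "v - w = 0" using ker by blast
    thus False using v w(1) by simp
  qed
  ultimately show ?thesis unfolding bij_betw_def T_def by simp
qed

lemma op_spectrum_real:
  assumes "z \<in> op_spectrum D A" shows "z = complex_of_real (Re z)"
proof -
  have "Im z = 0"
  proof (rule ccontr)
    assume nz: "Im z \<noteq> 0"
    have "bij_betw (\<lambda>x. A x - z *\<^sub>C x) D UNIV"
    proof (rule bij_betw_shift_if_bounded_below)
      show "\<bar>Im z\<bar> > 0" using nz by simp
      show "\<And>x. x \<in> D \<Longrightarrow> \<bar>Im z\<bar> * norm x \<le> norm (A x - z *\<^sub>C x)" by (rule norm_shift_ge_abs_Im)
      fix x assume x: "x \<in> D" "A x = cnj z *\<^sub>C x"
      have "\<bar>Im (cnj z)\<bar> * norm x \<le> 0" using norm_shift_ge_abs_Im[OF x(1), of "cnj z"] x(2) by simp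
      thus "x = 0" using nz by (simp add: mult_le_0_iff)
    qed
    thus False using assms unfolding op_spectrum_def by blast
  qed
  thus ?thesis by (simp add: complex_eq_iff)
qed

lemma approx_eigenvector:
  assumes "complex_of_real t \<in> op_spectrum D A" "e > 0"
  obtains u where "u \<in> D" "norm u = 1" "norm (A u - complex_of_real t *\<^sub>C u) < e"
proof (rule ccontr)
  assume "\<not> thesis"
  hence big: "\<And>u. u \<in> D \<Longrightarrow> norm u = 1 \<Longrightarrow> e \<le> norm (A u - complex_of_real t *\<^sub>C u)"
    using that by force
  have bound: "e * norm x \<le> norm (A x - complex_of_real t *\<^sub>C x)" if x: "x \<in> D" for x
  proof (cases "x = 0")
    case False
    define u where "u = complex_of_real (1 / norm x) *\<^sub>C x"
    have u: "u \<in> D" "norm u = 1" using x False by (auto simp: u_def scaleC_in_domain norm_scaleC norm_divide)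
    have "A u - complex_of_real t *\<^sub>C u = complex_of_real (1 / norm x) *\<^sub>C (A x - complex_of_real t *\<^sub>C x)"
      using x by (simp add: u_def A_scaleC cvs.scale_right_diff_distrib scaleC_scaleC mult.commute)
    hence "norm (A u - complex_of_real t *\<^sub>C u) = norm (A x - complex_of_real t *\<^sub>C x) / norm x"
      by (simp add: norm_scaleC norm_divide)
    with big[OF u] False show ?thesis by (simp add: field_simps)
  qed simp
  have "bij_betw (\<lambda>x. A x - complex_of_real t *\<^sub>C x) D UNIV"
  proof (rule bij_betw_shift_if_bounded_below[OF assms(2) bound])
    fix x assume x: "x \<in> D" "A x = cnj (complex_of_real t) *\<^sub>C x"
    have "e * norm x \<le> 0" using bound[OF x(1)] x(2) by simp
    thus "x = 0" using assms(2) by (simp add: mult_le_0_iff)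
  qed
  thus False using assms(1) unfolding op_spectrum_def by blast
qed

lemma weak_limit_eigenvector:
  assumes u: "\<And>k. u k \<in> D" and w: "weakly_to u w"
    and r: "(\<lambda>k. A (u k) - complex_of_real t *\<^sub>C u k) \<longlonglongrightarrow> 0"
  shows "w \<in> D \<and> A w = complex_of_real t *\<^sub>C w"
proof (rule eigenvector_if_form)
  fix f assume f: "f \<in> D"
  have e: "cinner (A f) (u k) =
      cinner f (A (u k) - complex_of_real t *\<^sub>C u k) + complex_of_real t * cinner f (u k)" for k
    using symmetric[OF f u] by (simp add: cinner_diff_right cinner_scaleC_right)
  have "(\<lambda>k. cinner (A f) (u k)) \<longlonglongrightarrow> cinner (A f) w" using w unfolding weakly_to_def by blast
  moreover have "(\<lambda>k. cinner f (A (u k) - complex_of_real t *\<^sub>C u k) + complex_of_real t * cinner f (u k))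
      \<longlonglongrightarrow> cinner f 0 + complex_of_real t * cinner f w"
    using w unfolding weakly_to_def by (intro tendsto_add tendsto_mult tendsto_const tendsto_cinner_right[OF r]) auto
  ultimately show "cinner (A f) w = complex_of_real t * cinner f w" unfolding e by (simp add: LIMSEQ_unique)
qed

lemma cinner_eigenvector_bound:
  assumes e: "e \<in> D" "A e = complex_of_real t *\<^sub>C e" and v: "v \<in> D"
  shows "\<bar>m - t\<bar> * cmod (cinner e v) \<le> norm e * norm (A v - complex_of_real m *\<^sub>C v)"
proof -
  have "cinner e (A v - complex_of_real m *\<^sub>C v) = complex_of_real (t - m) * cinner e v"
    using symmetric[OF e(1) v] e(2)
    by (simp add: cinner_diff_right cinner_scaleC_right cinner_scaleC_left algebra_simps)
  hence "\<bar>m - t\<bar> * cmod (cinner e v) = cmod (cinner e (A v - complex_of_real m *\<^sub>C v))"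
    by (simp only: norm_mult norm_of_real abs_minus_commute)
  also have "\<dots> \<le> norm e * norm (A v - complex_of_real m *\<^sub>C v)" by (rule Cauchy_Schwarz)
  finally show ?thesis .
qed

lemma weyl_sequence_if_approx_orthogonal:
  assumes sep: "separable_space TYPE('a)"
    and v: "\<And>k. v k \<in> D" "\<And>k. norm (v k) = 1"
    and r: "(\<lambda>k. A (v k) - complex_of_real t *\<^sub>C v k) \<longlonglongrightarrow> 0"
    and orth: "\<And>e. e \<in> D \<Longrightarrow> A e = complex_of_real t *\<^sub>C e \<Longrightarrow> (\<lambda>k. cinner e (v k)) \<longlonglongrightarrow> 0"
  shows "\<exists>u. weyl_sequence D A t u"
proof -
  obtain s w where s: "strict_mono s" "weakly_to (v \<circ> s) w"
    using bounded_seq_weakly_convergent_subseq[OF sep, of v 1] v(2) by auto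
  have rs: "(\<lambda>k. A ((v \<circ> s) k) - complex_of_real t *\<^sub>C (v \<circ> s) k) \<longlonglongrightarrow> 0"
    using LIMSEQ_subseq_LIMSEQ[OF r s(1)] by (simp add: o_def)
  have w: "w \<in> D \<and> A w = complex_of_real t *\<^sub>C w"
    using v(1) by (intro weak_limit_eigenvector[OF _ s(2) rs]) simp
  \<comment> \<open>the weak limit is an eigenvector that is asymptotically orthogonal to the sequence\<close>
  have "(\<lambda>k. cinner w ((v \<circ> s) k)) \<longlonglongrightarrow> 0"
    using LIMSEQ_subseq_LIMSEQ[OF orth[OF conjunct1[OF w] conjunct2[OF w]] s(1)] by (simp add: o_def)
  moreover have "(\<lambda>k. cinner w ((v \<circ> s) k)) \<longlonglongrightarrow> cinner w w" using s(2) unfolding weakly_to_def by blast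
  ultimately have "w = 0" using LIMSEQ_unique by fastforce
  thus ?thesis unfolding weyl_sequence_def using v s(2) rs by (intro exI[of _ "v \<circ> s"]) auto
qed

lemma weyl_sequence_if_infinite_eigenspace:
  assumes "\<not> cfinite_dim {x \<in> D. A x = complex_of_real t *\<^sub>C x}"
  shows "\<exists>u. weyl_sequence D A t u"
proof -
  obtain e :: "nat \<Rightarrow> 'a" where e: "\<And>k. e k \<in> {x \<in> D. A x = complex_of_real t *\<^sub>C x}"
    "\<And>k. norm (e k) = 1" "\<And>j k. j \<noteq> k \<Longrightarrow> cinner (e j) (e k) = 0"
    using infinite_dim_orthonormal_seq[OF eigenspace_csubspace assms] by metis
  have "weakly_to e 0" by (rule orthonormal_seq_weakly_to_0[OF e(2,3)])
  thus ?thesis using e(1,2) unfolding weyl_sequence_def by (intro exI[of _ e]) auto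
qed

lemma weyl_sequence_if_no_eigenvector:
  assumes sep: "separable_space TYPE('a)" and t: "complex_of_real t \<in> op_spectrum D A"
    and no: "{x \<in> D. A x = complex_of_real t *\<^sub>C x} = {0}"
  shows "\<exists>u. weyl_sequence D A t u"
proof -
  have "\<exists>v. v \<in> D \<and> norm v = 1 \<and> norm (A v - complex_of_real t *\<^sub>C v) < inverse (real (Suc k))" for k
  proof -
    have "inverse (real (Suc k)) > 0" by simp
    from approx_eigenvector[OF t this] show ?thesis by blast
  qed
  then obtain v where "\<forall>k. v k \<in> D \<and> norm (v k) = 1 \<and>
      norm (A (v k) - complex_of_real t *\<^sub>C v k) < inverse (real (Suc k))"
    by metis
  hence v: "\<And>k. v k \<in> D" "\<And>k. norm (v k) = 1"
    "\<And>k. norm (A (v k) - complex_of_real t *\<^sub>C v k) < inverse (real (Suc k))" by auto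
  show ?thesis
  proof (rule weyl_sequence_if_approx_orthogonal[OF sep v(1,2)])
    show "(\<lambda>k. A (v k) - complex_of_real t *\<^sub>C v k) \<longlonglongrightarrow> 0"
      by (rule tendsto_0_if_norm_le_inverse_Suc[of _ 1]) (use v(3) less_imp_le in auto)
    show "(\<lambda>k. cinner e (v k)) \<longlonglongrightarrow> 0" if "e \<in> D" "A e = complex_of_real t *\<^sub>C e" for e
    proof -
      have "e = 0" using no that by blast
      thus ?thesis by simp
    qed
  qed
qed

lemma spectral_point_nearby:
  assumes t: "complex_of_real t \<in> op_spectrum D A"
    and ni: "\<not> (\<exists>e>0. ball (complex_of_real t) e \<inter> op_spectrum D A = {complex_of_real t})"
    and e: "e > 0"
  obtains m v where "m \<noteq> t" "\<bar>m - t\<bar> < e" "v \<in> D" "norm v = 1"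
    "norm (A v - complex_of_real m *\<^sub>C v) < \<bar>m - t\<bar> * e"
proof -
  have "ball (complex_of_real t) e \<inter> op_spectrum D A \<noteq> {complex_of_real t}" using ni e by blast
  moreover have "complex_of_real t \<in> ball (complex_of_real t) e \<inter> op_spectrum D A" using t e by simp
  ultimately have "\<exists>\<mu>\<in>ball (complex_of_real t) e \<inter> op_spectrum D A. \<mu> \<noteq> complex_of_real t"
    by blast
  then obtain \<mu> where mu: "\<mu> \<in> op_spectrum D A" "dist (complex_of_real t) \<mu> < e"
    "\<mu> \<noteq> complex_of_real t" by auto
  define m where "m = Re \<mu>"
  have mu_eq: "\<mu> = complex_of_real m" unfolding m_def by (rule op_spectrum_real[OF mu(1)])
  have mt: "m \<noteq> t" using mu(3) mu_eq by auto
  have mte: "\<bar>m - t\<bar> < e" using mu(2) unfolding mu_eq dist_of_real by (simp add: dist_real_def abs_minus_commute)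
  have "\<bar>m - t\<bar> * e > 0" using mt e by simp
  then obtain v where "v \<in> D" "norm v = 1" "norm (A v - complex_of_real m *\<^sub>C v) < \<bar>m - t\<bar> * e"
    using approx_eigenvector[OF mu(1)[unfolded mu_eq]] by blast
  thus ?thesis using that[OF mt mte] by blast
qed

lemma weyl_sequence_if_not_isolated:
  assumes sep: "separable_space TYPE('a)" and t: "complex_of_real t \<in> op_spectrum D A"
    and ni: "\<not> (\<exists>e>0. ball (complex_of_real t) e \<inter> op_spectrum D A = {complex_of_real t})"
  shows "\<exists>u. weyl_sequence D A t u"
proof -
  define \<epsilon> where "\<epsilon> k = inverse (real (Suc k))" for k
  have "\<forall>k. \<exists>m v. m \<noteq> t \<and> \<bar>m - t\<bar> < \<epsilon> k \<and> v \<in> D \<and> norm v = 1 \<and>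
      norm (A v - complex_of_real m *\<^sub>C v) < \<bar>m - t\<bar> * \<epsilon> k"
    using spectral_point_nearby[OF t ni] unfolding \<epsilon>_def by (metis inverse_Suc)
  then obtain m v where mv: "\<And>k. m k \<noteq> t" "\<And>k. \<bar>m k - t\<bar> < \<epsilon> k" "\<And>k. v k \<in> D"
    "\<And>k. norm (v k) = 1" "\<And>k. norm (A (v k) - complex_of_real (m k) *\<^sub>C v k) < \<bar>m k - t\<bar> * \<epsilon> k"
    by metis
  have \<epsilon>1: "\<epsilon> k \<le> 1" for k by (simp add: \<epsilon>_def inverse_le_1_iff)
  show ?thesis
  proof (rule weyl_sequence_if_approx_orthogonal[OF sep mv(3,4)])
    show "(\<lambda>k. A (v k) - complex_of_real t *\<^sub>C v k) \<longlonglongrightarrow> 0"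
    proof (rule tendsto_0_if_norm_le_inverse_Suc[of _ 2])
      fix k
      have "\<bar>m k - t\<bar> * \<epsilon> k \<le> \<epsilon> k" using mv(2)[of k] \<epsilon>1[of k] by (simp add: mult_left_le_one_le \<epsilon>_def)
      moreover have "norm (A (v k) - complex_of_real t *\<^sub>C v k)
          \<le> norm (A (v k) - complex_of_real (m k) *\<^sub>C v k) + \<bar>m k - t\<bar>"
        using norm_diff_scaleC_of_real_le[of "A (v k)" t "v k" "m k"] mv(4)[of k] by simp
      ultimately show "norm (A (v k) - complex_of_real t *\<^sub>C v k) \<le> 2 * inverse (real (Suc k))"
        using mv(2,5)[of k] unfolding \<epsilon>_def by linarith
    qed
    fix e assume e: "e \<in> D" "A e = complex_of_real t *\<^sub>C e"
    \<comment> \<open>the factor \<open>\<bar>m k - t\<bar>\<close> cancels, which is why the residual was chosen relative to it\<close>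
    show "(\<lambda>k. cinner e (v k)) \<longlonglongrightarrow> 0"
    proof (rule tendsto_0_if_norm_le_inverse_Suc[of _ "norm e"])
      fix k
      have "\<bar>m k - t\<bar> * cmod (cinner e (v k)) \<le> norm e * norm (A (v k) - complex_of_real (m k) *\<^sub>C v k)"
        by (rule cinner_eigenvector_bound[OF e mv(3)[of k]])
      also have "\<dots> \<le> norm e * (\<bar>m k - t\<bar> * \<epsilon> k)"
        using mv(5)[of k] by (intro mult_left_mono) auto
      also have "\<dots> = \<bar>m k - t\<bar> * (norm e * \<epsilon> k)" by simp
      finally have "\<bar>m k - t\<bar> * cmod (cinner e (v k)) \<le> \<bar>m k - t\<bar> * (norm e * \<epsilon> k)" .
      thus "norm (cinner e (v k)) \<le> norm e * inverse (real (Suc k))"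
        using mv(1)[of k] by (simp add: mult_le_cancel_left_pos \<epsilon>_def)
    qed
  qed
qed

lemma weyl_sequence_if_not_disc_spectrum:
  assumes sep: "separable_space TYPE('a)" and t: "complex_of_real t \<in> op_spectrum D A"
    and nd: "complex_of_real t \<notin> disc_spectrum D A"
  shows "\<exists>u. weyl_sequence D A t u"
  using nd t weyl_sequence_if_not_isolated[OF sep t] weyl_sequence_if_no_eigenvector[OF sep t]
    weyl_sequence_if_infinite_eigenspace
  unfolding disc_spectrum_def by blast

end

text \<open>
  Both Galerkin methods are instances; the spectral inclusions use only \<open>residual_transfer\<close>
  and \<open>eigenvector_limit\<close>.
\<close>
locale galerkin_scheme = selfadjoint_op D A
  for D :: "'a::{complex_inner, complete_space} set" and A +
  fixes L :: "nat \<Rightarrow> 'a set" and An :: "nat \<Rightarrow> 'a \<Rightarrow> 'a"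
  assumes separable: "separable_space TYPE('a)"
    and finite_dim: "\<And>n. cfinite_dim (L n)"
    and An_in: "\<And>n x. x \<in> L n \<Longrightarrow> An n x \<in> L n"
    and An_add: "\<And>n x y. x \<in> L n \<Longrightarrow> y \<in> L n \<Longrightarrow> An n (x + y) = An n x + An n y"
    and An_scaleC: "\<And>n c x. x \<in> L n \<Longrightarrow> An n (c *\<^sub>C x) = c *\<^sub>C An n x"
    and residual_transfer: "\<And>u t e N. u \<in> D \<Longrightarrow> e > 0 \<Longrightarrow> \<exists>n\<ge>N. \<exists>x\<in>L n. norm (x - u) \<le> e \<and>
        norm (An n x - complex_of_real t *\<^sub>C x) \<le> norm (A u - complex_of_real t *\<^sub>C u) + e"
    and eigenvector_limit: "\<And>nk x lk t w. filterlim nk at_top sequentially \<Longrightarrow>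
        (\<forall>k. x k \<in> L (nk k) \<and> norm (x k) = 1 \<and> An (nk k) (x k) = lk k *\<^sub>C x k) \<Longrightarrow>
        lk \<longlonglongrightarrow> complex_of_real t \<Longrightarrow> weakly_to x w \<Longrightarrow> w \<in> D \<and> A w = complex_of_real t *\<^sub>C w"
begin

lemma normalize_in: "y \<in> L n \<Longrightarrow> complex_of_real (1 / norm y) *\<^sub>C y \<in> L n"
  using cfinite_dim_subspace[OF finite_dim] by (rule cvs.subspace_scale)

lemma residual_normalize_le:
  assumes y: "y \<in> L n" and y2: "norm y \<ge> 1/2"
  defines "x \<equiv> complex_of_real (1 / norm y) *\<^sub>C y"
  shows "norm (An n x - complex_of_real t *\<^sub>C x) \<le> 2 * norm (An n y - complex_of_real t *\<^sub>C y)"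
proof -
  define N where "N = norm (An n y - complex_of_real t *\<^sub>C y)"
  have "An n x - complex_of_real t *\<^sub>C x = complex_of_real (1 / norm y) *\<^sub>C (An n y - complex_of_real t *\<^sub>C y)"
    unfolding x_def An_scaleC[OF y] by (simp add: cvs.scale_right_diff_distrib scaleC_scaleC mult.commute)
  hence "norm (An n x - complex_of_real t *\<^sub>C x) = N / norm y" by (simp add: norm_scaleC norm_divide N_def)
  moreover have "N * 1 \<le> N * (2 * norm y)" by (rule mult_left_mono) (use y2 in \<open>auto simp: N_def\<close>)
  moreover have "y \<noteq> 0" using y2 by auto
  ultimately show ?thesis by (simp add: divide_le_eq mult_ac N_def[symmetric])
qed

lemma lim_ess_spectrum_if_weyl_sequence:
  assumes "weyl_sequence D A t u" shows "t \<in> lim_ess_spectrum L An"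
proof -
  have u: "\<And>k. u k \<in> D" "\<And>k. norm (u k) = 1" "weakly_to u 0"
    "(\<lambda>k. A (u k) - complex_of_real t *\<^sub>C u k) \<longlonglongrightarrow> 0"
    using assms unfolding weyl_sequence_def by auto
  define \<epsilon> where "\<epsilon> k = inverse (real (Suc k)) / 2" for k
  have \<epsilon>: "\<epsilon> k > 0" "\<epsilon> k \<le> 1/2" for k by (simp_all add: \<epsilon>_def inverse_le_1_iff)
  have \<epsilon>lim: "\<epsilon> \<longlonglongrightarrow> 0"
    unfolding \<epsilon>_def using tendsto_divide[OF LIMSEQ_inverse_real_of_nat tendsto_const[of 2]] by simp
  define r where "r k = norm (A (u k) - complex_of_real t *\<^sub>C u k) + \<epsilon> k" for k
  obtain n y where n: "filterlim n at_top sequentially"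
    and y: "\<And>k. y k \<in> L (n k) \<and> norm (y k - u k) \<le> \<epsilon> k \<and>
      norm (An (n k) (y k) - complex_of_real t *\<^sub>C y k) \<le> r k"
    using seq_choice_at_top[of "\<lambda>k n y. y \<in> L n \<and> norm (y - u k) \<le> \<epsilon> k \<and>
      norm (An n y - complex_of_real t *\<^sub>C y) \<le> r k"] residual_transfer[OF u(1) \<epsilon>(1)]
    unfolding r_def by blast
  define x where "x k = complex_of_real (1 / norm (y k)) *\<^sub>C y k" for k
  have xL: "x k \<in> L (n k)" for k using y normalize_in by (simp add: x_def)
  have y2: "norm (y k) \<ge> 1/2" and xu: "norm (x k - u k) \<le> 2 * \<epsilon> k" for k
    using normalize_close[of "y k" "u k" "\<epsilon> k"] y u(2) \<epsilon>(2) by (auto simp: x_def)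
  have "y k \<noteq> 0" for k using y2[of k] by auto
  hence xn: "norm (x k) = 1" for k by (simp add: x_def norm_scaleC norm_divide)
  have res: "norm (An (n k) (x k) - complex_of_real t *\<^sub>C x k) \<le> 2 * r k" for k
    using residual_normalize_le[of "y k" "n k" t] y[of k] y2[of k] unfolding x_def by linarith
  have "(\<lambda>k. 2 * r k) \<longlonglongrightarrow> 2 * (norm (0::'a) + 0)"
    unfolding r_def by (intro tendsto_intros u(4) \<epsilon>lim)
  hence "(\<lambda>k. 2 * r k) \<longlonglongrightarrow> 0" by simp
  hence "(\<lambda>k. An (n k) (x k) - complex_of_real t *\<^sub>C x k) \<longlonglongrightarrow> 0"
    by (rule Lim_null_comparison[rotated]) (use res in simp)
  moreover have "(\<lambda>k. 2 * \<epsilon> k) \<longlonglongrightarrow> 0" using tendsto_mult[OF tendsto_const[of 2] \<epsilon>lim] by simp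
  hence "(\<lambda>k. x k - u k) \<longlonglongrightarrow> 0" by (rule Lim_null_comparison[rotated]) (use xu in simp)
  hence "weakly_to x 0" by (rule weakly_to_if_tendsto_diff[OF _ u(3)])
  ultimately show ?thesis unfolding lim_ess_spectrum_def using n xL xn by blast
qed

lemma ess_spectrum_subset_lim_ess_spectrum:
  "ess_spectrum D A \<subseteq> complex_of_real ` lim_ess_spectrum L An"
proof
  fix z assume "z \<in> ess_spectrum D A"
  hence zs: "z \<in> op_spectrum D A" and zd: "z \<notin> disc_spectrum D A" unfolding ess_spectrum_def by auto
  have zt: "z = complex_of_real (Re z)" by (rule op_spectrum_real[OF zs])
  obtain u where "weyl_sequence D A (Re z) u"
    using weyl_sequence_if_not_disc_spectrum[OF separable] zs zd zt by metis
  hence "Re z \<in> lim_ess_spectrum L An" by (rule lim_ess_spectrum_if_weyl_sequence)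
  thus "z \<in> complex_of_real ` lim_ess_spectrum L An" using zt by (metis image_eqI)
qed

lemma lim_spectrum_eigenvectors:
  assumes "t \<in> lim_spectrum L An"
  obtains nk lk x where "filterlim nk at_top sequentially" "lk \<longlonglongrightarrow> complex_of_real t"
    "\<forall>k. x k \<in> L (nk k) \<and> norm (x k) = 1 \<and> An (nk k) (x k) = lk k *\<^sub>C x k"
proof -
  obtain nk lk where nk: "filterlim nk at_top sequentially"
    and lk: "\<And>k. lk k \<in> fin_spectrum (L (nk k)) (An (nk k))" and lkt: "lk \<longlonglongrightarrow> complex_of_real t"
    using assms unfolding lim_spectrum_def by blast
  have "\<exists>x. x \<in> L (nk k) \<and> norm x = 1 \<and> An (nk k) x = lk k *\<^sub>C x" for k
  proof -
    obtain y where y: "y \<in> L (nk k)" "y \<noteq> 0" "An (nk k) y = lk k *\<^sub>C y"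
      using fin_spectrum_eigenvector[OF finite_dim lk An_in An_add An_scaleC] by blast
    define x where "x = complex_of_real (1 / norm y) *\<^sub>C y"
    have "An (nk k) x = lk k *\<^sub>C x"
      unfolding x_def An_scaleC[OF y(1)] y(3) by (simp add: scaleC_scaleC mult.commute)
    thus ?thesis using y normalize_in by (intro exI[of _ x]) (simp add: x_def norm_scaleC norm_divide)
  qed
  then obtain x where "\<forall>k. x k \<in> L (nk k) \<and> norm (x k) = 1 \<and> An (nk k) (x k) = lk k *\<^sub>C x k"
    by metis
  thus ?thesis using that nk lkt by blast
qed

lemma lim_disc_spectrum_eigenvector:
  assumes "t \<in> lim_disc_spectrum L An"
  obtains w where "w \<noteq> 0" "w \<in> D" "A w = complex_of_real t *\<^sub>C w"
proof -
  have ts: "t \<in> lim_spectrum L An" and tne: "t \<notin> lim_ess_spectrum L An"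
    using assms unfolding lim_disc_spectrum_def by auto
  obtain nk lk x where nk: "filterlim nk at_top sequentially" and lkt: "lk \<longlonglongrightarrow> complex_of_real t"
    and x: "\<forall>k. x k \<in> L (nk k) \<and> norm (x k) = 1 \<and> An (nk k) (x k) = lk k *\<^sub>C x k"
    using lim_spectrum_eigenvectors[OF ts] by blast
  obtain r w where r: "strict_mono r" "weakly_to (x \<circ> r) w"
    using bounded_seq_weakly_convergent_subseq[OF separable, of x 1] x by auto
  have nkr: "filterlim (nk \<circ> r) at_top sequentially"
    unfolding o_def by (rule filterlim_compose[OF nk filterlim_subseq[OF r(1)]])
  have lkr: "(lk \<circ> r) \<longlonglongrightarrow> complex_of_real t" by (rule LIMSEQ_subseq_LIMSEQ[OF lkt r(1)])
  have xr: "\<forall>k. (x \<circ> r) k \<in> L ((nk \<circ> r) k) \<and> norm ((x \<circ> r) k) = 1 \<and>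
      An ((nk \<circ> r) k) ((x \<circ> r) k) = (lk \<circ> r) k *\<^sub>C (x \<circ> r) k" using x by simp
  \<comment> \<open>a weakly null subsequence would put t into the limiting essential spectrum\<close>
  have "w \<noteq> 0"
  proof
    assume w: "w = 0"
    have "(\<lambda>k. An ((nk \<circ> r) k) ((x \<circ> r) k) - complex_of_real t *\<^sub>C (x \<circ> r) k) \<longlonglongrightarrow> 0"
    proof (rule Lim_null_comparison)
      show "\<forall>\<^sub>F k in sequentially. norm (An ((nk \<circ> r) k) ((x \<circ> r) k) - complex_of_real t *\<^sub>C (x \<circ> r) k)
          \<le> cmod ((lk \<circ> r) k - complex_of_real t)"
        using xr by (simp add: scaleC_add_left[symmetric] cvs.scale_left_diff_distrib[symmetric] norm_scaleC)
      show "(\<lambda>k. cmod ((lk \<circ> r) k - complex_of_real t)) \<longlonglongrightarrow> 0"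
        using lkr by (simp add: tendsto_norm_zero_iff LIM_zero_iff o_def)
    qed
    hence "t \<in> lim_ess_spectrum L An"
      unfolding lim_ess_spectrum_def using nkr xr r(2) w by blast
    thus False using tne by simp
  qed
  moreover have "w \<in> D \<and> A w = complex_of_real t *\<^sub>C w" by (rule eigenvector_limit[OF nkr xr lkr r(2)])
  ultimately show ?thesis using that by blast
qed

lemma lim_disc_spectrum_subset_disc_spectrum:
  "complex_of_real ` lim_disc_spectrum L An \<subseteq> disc_spectrum D A"
proof
  fix z assume "z \<in> complex_of_real ` lim_disc_spectrum L An"
  then obtain t where zt: "z = complex_of_real t" and t: "t \<in> lim_disc_spectrum L An" by blast
  obtain w where w: "w \<noteq> 0" "w \<in> D" "A w = complex_of_real t *\<^sub>C w"
    using lim_disc_spectrum_eigenvector[OF t] .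
  have "A w - complex_of_real t *\<^sub>C w = A 0 - complex_of_real t *\<^sub>C 0" using w(3) A_zero by simp
  hence "\<not> inj_on (\<lambda>x. A x - complex_of_real t *\<^sub>C x) D"
    using w(1,2) zero_in_domain by (meson inj_onD)
  hence spec: "complex_of_real t \<in> op_spectrum D A" unfolding op_spectrum_def bij_betw_def by blast
  have "complex_of_real t \<in> disc_spectrum D A"
  proof (rule ccontr)
    assume "complex_of_real t \<notin> disc_spectrum D A"
    then obtain u where "weyl_sequence D A t u"
      using weyl_sequence_if_not_disc_spectrum[OF separable spec] by blast
    hence "t \<in> lim_ess_spectrum L An" by (rule lim_ess_spectrum_if_weyl_sequence)
    thus False using t unfolding lim_disc_spectrum_def by blast
  qed
  thus "z \<in> disc_spectrum D A" using zt by simp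
qed

end

section \<open>Closedness of the limiting spectra\<close>

lemma lim_spectrum_iff:
  "t \<in> lim_spectrum L An \<longleftrightarrow>
    (\<forall>e>0. \<forall>N. \<exists>n\<ge>N. \<exists>\<mu>\<in>fin_spectrum (L n) (An n). cmod (\<mu> - complex_of_real t) < e)"
proof
  assume "t \<in> lim_spectrum L An"
  then obtain nk lk where nk: "filterlim nk at_top sequentially"
    and lk: "\<And>k. lk k \<in> fin_spectrum (L (nk k)) (An (nk k))" and lkt: "lk \<longlonglongrightarrow> complex_of_real t"
    unfolding lim_spectrum_def by blast
  show "\<forall>e>0. \<forall>N. \<exists>n\<ge>N. \<exists>\<mu>\<in>fin_spectrum (L n) (An n). cmod (\<mu> - complex_of_real t) < e"
  proof (intro allI impI)
    fix e :: real and N assume e: "e > 0"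
    have "eventually (\<lambda>k. N \<le> nk k \<and> dist (lk k) (complex_of_real t) < e) sequentially"
      using nk tendstoD[OF lkt e] unfolding filterlim_at_top by (simp add: eventually_conj)
    then obtain k where "N \<le> nk k" "dist (lk k) (complex_of_real t) < e"
      unfolding eventually_sequentially by blast
    thus "\<exists>n\<ge>N. \<exists>\<mu>\<in>fin_spectrum (L n) (An n). cmod (\<mu> - complex_of_real t) < e"
      using lk by (auto simp: dist_norm)
  qed
next
  assume approx: "\<forall>e>0. \<forall>N. \<exists>n\<ge>N. \<exists>\<mu>\<in>fin_spectrum (L n) (An n). cmod (\<mu> - complex_of_real t) < e"
  have "\<exists>n\<ge>k. \<exists>\<mu>. \<mu> \<in> fin_spectrum (L n) (An n) \<and>
      cmod (\<mu> - complex_of_real t) < inverse (real (Suc k))" for k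
    using approx by (metis inverse_Suc)
  then obtain nk lk where nk: "filterlim nk at_top sequentially"
    and lk: "\<And>k. lk k \<in> fin_spectrum (L (nk k)) (An (nk k)) \<and>
        cmod (lk k - complex_of_real t) < inverse (real (Suc k))"
    using seq_choice_at_top[of "\<lambda>k n \<mu>. \<mu> \<in> fin_spectrum (L n) (An n) \<and>
        cmod (\<mu> - complex_of_real t) < inverse (real (Suc k))"] by blast
  have "(\<lambda>k. lk k - complex_of_real t) \<longlonglongrightarrow> 0"
    by (rule tendsto_0_if_norm_le_inverse_Suc[of _ 1]) (use lk less_imp_le in auto)
  thus "t \<in> lim_spectrum L An" unfolding lim_spectrum_def using nk lk by (auto simp: LIM_zero_iff)
qed

lemma closed_lim_spectrum: "closed (lim_spectrum L An)"
  unfolding closed_sequential_limits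
proof (intro allI impI)
  fix s and l :: real assume a: "(\<forall>j. s j \<in> lim_spectrum L An) \<and> s \<longlonglongrightarrow> l"
  show "l \<in> lim_spectrum L An" unfolding lim_spectrum_iff
  proof (intro allI impI)
    fix e :: real and N assume e: "e > 0"
    obtain j where j: "\<bar>s j - l\<bar> < e / 2"
      using LIMSEQ_D[of s l "e / 2"] a e by (auto simp: dist_real_def)
    have "e / 2 > 0" using e by simp
    then obtain n \<mu> where n: "n \<ge> N" "\<mu> \<in> fin_spectrum (L n) (An n)"
      "cmod (\<mu> - complex_of_real (s j)) < e / 2"
      using a unfolding lim_spectrum_iff by blast
    have "\<mu> - complex_of_real l = (\<mu> - complex_of_real (s j)) + complex_of_real (s j - l)" by simp
    hence "cmod (\<mu> - complex_of_real l) \<le> cmod (\<mu> - complex_of_real (s j)) + cmod (complex_of_real (s j - l))"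
      by (metis norm_triangle_ineq)
    hence "cmod (\<mu> - complex_of_real l) < e" using n(3) j by (simp only: norm_of_real)
    thus "\<exists>n\<ge>N. \<exists>\<mu>\<in>fin_spectrum (L n) (An n). cmod (\<mu> - complex_of_real l) < e"
      using n(1,2) by blast
  qed
qed

lemma lim_ess_spectrum_approx:
  assumes "t \<in> lim_ess_spectrum L An" and e: "e > 0" and F: "finite F"
  shows "\<exists>n\<ge>N. \<exists>x\<in>L n. norm x = 1 \<and> (\<forall>y\<in>F. cmod (cinner y x) < e) \<and>
    norm (An n x - complex_of_real t *\<^sub>C x) < e"
proof -
  obtain nk x where nk: "filterlim nk at_top sequentially"
    and x: "\<forall>k. x k \<in> L (nk k) \<and> norm (x k) = 1" and wx: "weakly_to x 0"
    and r: "(\<lambda>k. An (nk k) (x k) - complex_of_real t *\<^sub>C x k) \<longlonglongrightarrow> 0"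
    using assms(1) unfolding lim_ess_spectrum_def by blast
  have "eventually (\<lambda>k. \<forall>y\<in>F. cmod (cinner y (x k)) < e) sequentially"
  proof (rule eventually_ball_finite[OF F], intro ballI)
    fix y
    have "(\<lambda>k. cinner y (x k)) \<longlonglongrightarrow> 0" using wx unfolding weakly_to_def by simp
    from tendstoD[OF this e] show "eventually (\<lambda>k. cmod (cinner y (x k)) < e) sequentially"
      by (simp add: dist_norm)
  qed
  moreover have "eventually (\<lambda>k. N \<le> nk k) sequentially" using nk unfolding filterlim_at_top by blast
  moreover have "eventually (\<lambda>k. norm (An (nk k) (x k) - complex_of_real t *\<^sub>C x k) < e) sequentially"
    using tendstoD[OF r e] by (simp add: dist_norm)
  ultimately have "eventually (\<lambda>k. (\<forall>y\<in>F. cmod (cinner y (x k)) < e) \<and> N \<le> nk k \<and>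
      norm (An (nk k) (x k) - complex_of_real t *\<^sub>C x k) < e) sequentially"
    by (intro eventually_conj)
  then obtain k where "N \<le> nk k" "\<forall>y\<in>F. cmod (cinner y (x k)) < e"
    "norm (An (nk k) (x k) - complex_of_real t *\<^sub>C x k) < e"
    unfolding eventually_sequentially by blast
  thus ?thesis using x by blast
qed

lemma lim_ess_spectrum_if_approx:
  fixes L :: "nat \<Rightarrow> 'a::complex_inner set"
  assumes sep: "separable_space TYPE('a)"
    and near: "\<And>e N F. e > 0 \<Longrightarrow> finite F \<Longrightarrow> \<exists>n\<ge>N. \<exists>x\<in>L n. norm x = 1 \<and>
      (\<forall>y\<in>F. cmod (cinner y x) < e) \<and> norm (An n x - complex_of_real t *\<^sub>C x) < e"
  shows "t \<in> lim_ess_spectrum L An"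
proof -
  obtain C :: "'a set" where C: "countable C" "closure C = UNIV"
    using sep unfolding separable_space_def by blast
  hence "C \<noteq> {}" by auto
  hence rc: "range (from_nat_into C) = C" using C(1) by simp
  \<comment> \<open>at stage k, the vector is almost orthogonal to the first k points of a countable dense set\<close>
  define P where "P k n x \<longleftrightarrow> x \<in> L n \<and> norm x = 1 \<and>
      (\<forall>y\<in>from_nat_into C ` {..k}. cmod (cinner y x) < inverse (real (Suc k))) \<and>
      norm (An n x - complex_of_real t *\<^sub>C x) < inverse (real (Suc k))" for k n x
  have "\<exists>n\<ge>k. \<exists>x. P k n x" for k
    using near[of "inverse (real (Suc k))" "from_nat_into C ` {..k}" k] unfolding P_def by auto
  then obtain nk x where nk: "filterlim nk at_top sequentially" and x: "\<And>k. P k (nk k) (x k)"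
    using seq_choice_at_top[of P] by blast
  have "weakly_to x 0"
  proof (rule weakly_to_0_if_dense[OF _ C(2)])
    show "norm (x k) \<le> 1" for k using x[of k] by (simp add: P_def)
    fix c assume "c \<in> C"
    then obtain i where i: "c = from_nat_into C i" using rc by blast
    show "(\<lambda>k. cinner c (x k)) \<longlonglongrightarrow> 0"
    proof (rule Lim_null_comparison)
      show "\<forall>\<^sub>F k in sequentially. norm (cinner c (x k)) \<le> inverse (real (Suc k))"
        using eventually_ge_at_top[of i] by eventually_elim (use x i in \<open>auto simp: P_def less_imp_le\<close>)
    qed (rule LIMSEQ_inverse_real_of_nat)
  qed
  moreover have "(\<lambda>k. An (nk k) (x k) - complex_of_real t *\<^sub>C x k) \<longlonglongrightarrow> 0"
    by (rule tendsto_0_if_norm_le_inverse_Suc[of _ 1]) (use x in \<open>auto simp: P_def less_imp_le\<close>)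
  ultimately show "t \<in> lim_ess_spectrum L An"
    unfolding lim_ess_spectrum_def using nk x unfolding P_def by blast
qed

lemma closed_lim_ess_spectrum:
  fixes L :: "nat \<Rightarrow> 'a::complex_inner set"
  assumes sep: "separable_space TYPE('a)"
  shows "closed (lim_ess_spectrum L An)"
  unfolding closed_sequential_limits
proof (intro allI impI)
  fix s and l :: real assume a: "(\<forall>j. s j \<in> lim_ess_spectrum L An) \<and> s \<longlonglongrightarrow> l"
  show "l \<in> lim_ess_spectrum L An"
  proof (rule lim_ess_spectrum_if_approx[OF sep])
    fix e :: real and N and F :: "'a set" assume e: "e > 0" and F: "finite F"
    obtain j where j: "\<bar>s j - l\<bar> < e / 2"
      using LIMSEQ_D[of s l "e / 2"] a e by (auto simp: dist_real_def)
    have "e / 2 > 0" using e by simp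
    then obtain n x where n: "n \<ge> N" "x \<in> L n" "norm x = 1" "\<forall>y\<in>F. cmod (cinner y x) < e / 2"
      "norm (An n x - complex_of_real (s j) *\<^sub>C x) < e / 2"
      using lim_ess_spectrum_approx[of "s j" L An "e / 2" F N] a F by blast
    have "norm (An n x - complex_of_real l *\<^sub>C x) < e"
      using norm_diff_scaleC_of_real_le[of "An n x" l x "s j"] n(3,5) j by simp
    moreover have "\<forall>y\<in>F. cmod (cinner y x) < e" using n(4) e by force
    ultimately show "\<exists>n\<ge>N. \<exists>x\<in>L n. norm x = 1 \<and> (\<forall>y\<in>F. cmod (cinner y x) < e) \<and>
        norm (An n x - complex_of_real l *\<^sub>C x) < e"
      using n(1-3) by blast
  qed
qed

lemma graph_norm_tendsto:
  fixes g :: "nat \<Rightarrow> 'a::real_normed_vector"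
  assumes "(\<lambda>n. norm (g n - f) + norm (T (g n) - T f)) \<longlonglongrightarrow> 0"
  shows "g \<longlonglongrightarrow> f" "(\<lambda>n. T (g n)) \<longlonglongrightarrow> T f"
proof -
  have "(\<lambda>n. g n - f) \<longlonglongrightarrow> 0" "(\<lambda>n. T (g n) - T f) \<longlonglongrightarrow> 0"
    by (rule Lim_null_comparison[OF _ assms]; simp)+
  thus "g \<longlonglongrightarrow> f" "(\<lambda>n. T (g n)) \<longlonglongrightarrow> T f" by (simp_all add: LIM_zero_iff)
qed

lemma graph_norm_close:
  fixes g :: "nat \<Rightarrow> 'a::real_normed_vector"
  assumes "(\<lambda>n. norm (g n - f) + norm (T (g n) - T f)) \<longlonglongrightarrow> 0" "e > 0"
  obtains n where "n \<ge> N" "norm (g n - f) + norm (T (g n) - T f) < e"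
proof -
  obtain n0 where "\<And>n. n \<ge> n0 \<Longrightarrow> norm (g n - f) + norm (T (g n) - T f) < e"
    using LIMSEQ_D[OF assms] by auto
  thus ?thesis using that[of "max N n0"] by simp
qed

lemma norm_residual_perturb:
  fixes a b x u :: "'a::complex_inner"
  shows "norm (a - complex_of_real t *\<^sub>C x)
    \<le> norm (b - complex_of_real t *\<^sub>C u) + (1 + \<bar>t\<bar>) * (norm (x - u) + norm (a - b))"
proof -
  have "a - complex_of_real t *\<^sub>C x = (b - complex_of_real t *\<^sub>C u) + (a - b) - complex_of_real t *\<^sub>C (x - u)"
    by (simp add: cvs.scale_right_diff_distrib)
  hence "norm (a - complex_of_real t *\<^sub>C x)
      \<le> norm ((b - complex_of_real t *\<^sub>C u) + (a - b)) + norm (complex_of_real t *\<^sub>C (x - u))"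
    by (simp only: norm_triangle_ineq4)
  also have "\<dots> \<le> norm (b - complex_of_real t *\<^sub>C u) + norm (a - b) + \<bar>t\<bar> * norm (x - u)"
    unfolding norm_scaleC_of_real using norm_triangle_ineq[of "b - complex_of_real t *\<^sub>C u" "a - b"] by simp
  also have "\<dots> \<le> norm (b - complex_of_real t *\<^sub>C u) + (1 + \<bar>t\<bar>) * (norm (x - u) + norm (a - b))"
    by (simp add: algebra_simps)
  finally show ?thesis .
qed

lemma galerkin_op_residual_le:
  assumes fd: "cfinite_dim V" and x: "x \<in> V"
  shows "norm (cproj V (A x) - complex_of_real t *\<^sub>C x) \<le> norm (A x - complex_of_real t *\<^sub>C x)"
proof -
  have "complex_of_real t *\<^sub>C x \<in> V" using x cfinite_dim_subspace[OF fd] cvs.subspace_scale by blast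
  hence "cproj V (A x) - complex_of_real t *\<^sub>C x = cproj V (A x - complex_of_real t *\<^sub>C x)"
    by (simp add: cproj_diff[OF fd] cproj_id[OF fd])
  thus ?thesis using norm_cproj_le[OF fd] by simp
qed

context selfadjoint_op
begin

lemma galerkin_op_residual_transfer:
  assumes reg: "op_regular D A L" and u: "u \<in> D" and e: "e > 0"
  shows "\<exists>n\<ge>N. \<exists>x\<in>L n. norm (x - u) \<le> e \<and>
    norm (galerkin_op A L n x - complex_of_real t *\<^sub>C x) \<le> norm (A u - complex_of_real t *\<^sub>C u) + e"
proof -
  obtain g where g: "\<And>n. g n \<in> L n" "(\<lambda>n. norm (g n - u) + norm (A (g n) - A u)) \<longlonglongrightarrow> 0"
    using reg u unfolding op_regular_def by blast
  have fd: "cfinite_dim (L n)" for n using reg unfolding op_regular_def galerkin_seq_def by blast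
  have "e / (1 + \<bar>t\<bar>) > 0" using e by (simp add: add_pos_nonneg)
  then obtain n where n: "n \<ge> N" "norm (g n - u) + norm (A (g n) - A u) < e / (1 + \<bar>t\<bar>)"
    using graph_norm_close[OF g(2)] by blast
  hence d: "(1 + \<bar>t\<bar>) * (norm (g n - u) + norm (A (g n) - A u)) \<le> e"
    by (simp add: field_simps add_pos_nonneg)
  have "norm (galerkin_op A L n (g n) - complex_of_real t *\<^sub>C g n) \<le> norm (A (g n) - complex_of_real t *\<^sub>C g n)"
    unfolding galerkin_op_def by (rule galerkin_op_residual_le[OF fd g(1)])
  also have "\<dots> \<le> norm (A u - complex_of_real t *\<^sub>C u) + e"
    using norm_residual_perturb[of "A (g n)" t "g n" "A u" u] d by linarith
  finally have "norm (galerkin_op A L n (g n) - complex_of_real t *\<^sub>C g n)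
      \<le> norm (A u - complex_of_real t *\<^sub>C u) + e" .
  moreover have "norm (g n - u) \<le> e"
    using d by (smt (verit) mult_le_cancel_right1 norm_ge_zero abs_ge_zero)
  ultimately show ?thesis using n(1) g(1) by blast
qed

lemma galerkin_op_eigenvector_limit:
  assumes reg: "op_regular D A L" and nk: "filterlim nk at_top sequentially"
    and x: "\<forall>k. x k \<in> L (nk k) \<and> norm (x k) = 1 \<and> galerkin_op A L (nk k) (x k) = lk k *\<^sub>C x k"
    and lk: "lk \<longlonglongrightarrow> complex_of_real t" and w: "weakly_to x w"
  shows "w \<in> D \<and> A w = complex_of_real t *\<^sub>C w"
proof (rule eigenvector_if_form)
  have fd: "cfinite_dim (L n)" and LD: "L n \<subseteq> D" for n
    using reg unfolding op_regular_def galerkin_seq_def by auto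
  fix f assume f: "f \<in> D"
  obtain g where g: "\<And>n. g n \<in> L n" "(\<lambda>n. norm (g n - f) + norm (A (g n) - A f)) \<longlonglongrightarrow> 0"
    using reg f unfolding op_regular_def by blast
  have g1: "(\<lambda>k. g (nk k)) \<longlonglongrightarrow> f" using filterlim_compose[OF graph_norm_tendsto(1)[OF g(2)] nk] .
  have g2: "(\<lambda>k. A (g (nk k))) \<longlonglongrightarrow> A f" using filterlim_compose[OF graph_norm_tendsto(2)[OF g(2)] nk] .
  have xn: "\<And>k. norm (x k) = 1" using x by blast
  have eq: "cinner (A (g (nk k))) (x k) = lk k * cinner (g (nk k)) (x k)" for k
  proof -
    have xk: "x k \<in> L (nk k)" using x by blast
    have "cinner (A (g (nk k))) (x k) = cinner (g (nk k)) (A (x k))"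
      using symmetric g(1) xk LD by blast
    also have "\<dots> = cinner (g (nk k)) (cproj (L (nk k)) (A (x k)))"
      using cproj_orthogonal[OF fd g(1), of "nk k" "A (x k)"] by (simp add: cinner_diff_right)
    also have "\<dots> = lk k * cinner (g (nk k)) (x k)"
      using x unfolding galerkin_op_def by (simp add: cinner_scaleC_right)
    finally show ?thesis .
  qed
  have "(\<lambda>k. cinner (A (g (nk k))) (x k)) \<longlonglongrightarrow> cinner (A f) w"
    by (rule tendsto_cinner_strong_weak[OF g2 w xn])
  moreover have "(\<lambda>k. lk k * cinner (g (nk k)) (x k)) \<longlonglongrightarrow> complex_of_real t * cinner f w"
    by (rule tendsto_mult[OF lk tendsto_cinner_strong_weak[OF g1 w xn]])
  ultimately show "cinner (A f) w = complex_of_real t * cinner f w" unfolding eq by (rule LIMSEQ_unique)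
qed

lemma galerkin_scheme_galerkin_op:
  assumes sep: "separable_space TYPE('a)" and reg: "op_regular D A L"
  shows "galerkin_scheme D A L (galerkin_op A L)"
proof -
  have fd: "cfinite_dim (L n)" and LD: "L n \<subseteq> D" for n
    using reg unfolding op_regular_def galerkin_seq_def by auto
  show ?thesis
  proof (unfold_locales)
    show "galerkin_op A L n x \<in> L n" for n x
      unfolding galerkin_op_def by (rule cproj_in[OF fd])
    show "galerkin_op A L n (x + y) = galerkin_op A L n x + galerkin_op A L n y"
      if "x \<in> L n" "y \<in> L n" for n x y
      using that LD[of n] unfolding galerkin_op_def by (simp add: subset_iff A_add cproj_add[OF fd])
    show "galerkin_op A L n (c *\<^sub>C x) = c *\<^sub>C galerkin_op A L n x" if "x \<in> L n" for n c x
      using that LD[of n] unfolding galerkin_op_def by (simp add: subset_iff A_scaleC cproj_scaleC[OF fd])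
  qed (use sep fd galerkin_op_residual_transfer[OF reg] galerkin_op_eigenvector_limit[OF reg] in auto)
qed

end

locale sqrt_galerkin =
  fixes D :: "'a::{complex_inner, complete_space} set" and A :: "'a \<Rightarrow> 'a"
    and DS :: "'a set" and S :: "'a \<Rightarrow> 'a" and L :: "nat \<Rightarrow> 'a set"
  assumes sqrt: "is_op_sqrt D A DS S" and regular: "op_regular DS S L"
begin

sublocale S: selfadjoint_op DS S
  using sqrt unfolding is_op_sqrt_def by unfold_locales blast

abbreviation An :: "nat \<Rightarrow> 'a \<Rightarrow> 'a" where "An \<equiv> galerkin_form_op S L"

lemma finite_dim: "cfinite_dim (L n)" and subset_domain: "L n \<subseteq> DS"
  using regular unfolding op_regular_def galerkin_seq_def by auto

lemma subspace_L: "cvs.subspace (L n)"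
  by (rule cfinite_dim_subspace[OF finite_dim])

lemma domain_A: "D = {x \<in> DS. S x \<in> DS}" and sqrt_apply_sqrt: "x \<in> D \<Longrightarrow> S (S x) = A x"
  using sqrt unfolding is_op_sqrt_def by auto

lemma form_representer_exists:
  assumes x: "x \<in> DS"
  shows "\<exists>w\<in>L n. \<forall>y\<in>L n. cinner y w = cinner (S y) (S x)"
proof -
  obtain E where E: "finite E" "orthonormal E" "cvs.span E = L n" using cfinite_dim_orthonormal_basis[OF finite_dim] .
  have ED: "E \<subseteq> DS" using E(3) cvs.span_superset subset_domain by blast
  define w where "w = (\<Sum>e\<in>E. cinner (S e) (S x) *\<^sub>C e)"
  have "w \<in> L n" unfolding w_def E(3)[symmetric] by (intro cvs.span_sum cvs.span_scale cvs.span_base)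
  moreover have "cinner y w = cinner (S y) (S x)" if y: "y \<in> L n" for y
  proof -
    have "y = (\<Sum>e\<in>E. cinner e y *\<^sub>C e)"
      using fproj_id[OF E(1,2), of y] y E(3) unfolding fproj_def by simp
    hence Sy: "S y = (\<Sum>e\<in>E. cinner e y *\<^sub>C S e)"
      using S.A_linear_combination[OF E(1) ED, of "\<lambda>e. cinner e y"] by simp
    have "cinner (S y) (S x) = (\<Sum>e\<in>E. cnj (cinner e y) * cinner (S e) (S x))"
      unfolding Sy by (simp add: cinner_sum_left cinner_scaleC_left)
    also have "\<dots> = cinner y w"
      unfolding w_def by (simp add: cinner_sum_right cinner_scaleC_right cinner_commute[of y] mult.commute)
    finally show ?thesis by simp
  qed
  ultimately show ?thesis by blast
qed

lemma An_eqI: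
  assumes "w \<in> L n" "\<forall>y\<in>L n. cinner y w = cinner (S y) (S x)"
  shows "An n x = w"
  unfolding galerkin_form_op_def
proof (rule the_equality)
  show "w \<in> L n \<and> (\<forall>y\<in>L n. cinner y w = cinner (S y) (S x))" using assms by blast
next
  fix w' assume w': "w' \<in> L n \<and> (\<forall>y\<in>L n. cinner y w' = cinner (S y) (S x))"
  have d: "w' - w \<in> L n" using w' assms(1) subspace_L cvs.subspace_diff by blast
  have "cinner (w' - w) (w' - w) = cinner (w' - w) w' - cinner (w' - w) w" by (simp add: cinner_diff_right)
  also have "\<dots> = 0" using w' assms(2) d by simp
  finally show "w' = w" by simp
qed

lemma An_in: "x \<in> DS \<Longrightarrow> An n x \<in> L n"
  and An_form: "x \<in> DS \<Longrightarrow> y \<in> L n \<Longrightarrow> cinner y (An n x) = cinner (S y) (S x)"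
  using form_representer_exists An_eqI by metis+

lemma An_add: "x \<in> DS \<Longrightarrow> y \<in> DS \<Longrightarrow> An n (x + y) = An n x + An n y"
  by (rule An_eqI)
     (simp_all add: An_in cvs.subspace_add[OF subspace_L] An_form cinner_add_right S.A_add)

lemma An_scaleC: "x \<in> DS \<Longrightarrow> An n (c *\<^sub>C x) = c *\<^sub>C An n x"
  by (rule An_eqI)
     (simp_all add: An_in cvs.subspace_scale[OF subspace_L] An_form cinner_scaleC_right S.A_scaleC)

text \<open>
  Ritz projection of u onto \<open>L n\<close>: the orthogonal projection with respect to the graph inner product
  \<open>\<langle>S y, S x\<rangle> + \<langle>y, x\<rangle>\<close>.
\<close>
lemma An_plus_id_eq_0:
  assumes z: "z \<in> L n" and "An n z + z = 0"
  shows "z = 0"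
proof -
  have "cinner z (An n z) + cinner z z = 0" using assms(2) by (simp add: cinner_add_right[symmetric])
  moreover have "cinner z (An n z) = cinner (S z) (S z)"
    using z subset_domain by (intro An_form) auto
  ultimately have "Re (cinner (S z) (S z)) + Re (cinner z z) = 0"
    by (metis plus_complex.sel(1) zero_complex.sel(1))
  hence "(norm (S z))^2 + (norm z)^2 = 0" by (simp only: cinner_self_Re)
  hence "(norm z)^2 = 0" using zero_le_power2[of "norm (S z)"] zero_le_power2[of "norm z"] by linarith
  thus "z = 0" by simp
qed

lemma An_plus_id_surj: "(\<lambda>v. An n v + v) ` L n = L n"
proof -
  define B where "B v = An n v + v" for v
  have BL: "B ` L n \<subseteq> L n"
  proof
    fix b assume "b \<in> B ` L n"
    then obtain v where "v \<in> L n" "b = B v" by blast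
    moreover have "v \<in> DS" using \<open>v \<in> L n\<close> subset_domain by blast
    ultimately show "b \<in> L n" using An_in cvs.subspace_add[OF subspace_L] by (simp add: B_def)
  qed
  have Badd: "B (v + v') = B v + B v'" if "v \<in> L n" "v' \<in> L n" for v v'
  proof -
    have "v \<in> DS" "v' \<in> DS" using that subset_domain by blast+
    thus ?thesis by (simp add: B_def An_add)
  qed
  have Bsc: "B (c *\<^sub>C v) = c *\<^sub>C B v" if "v \<in> L n" for c v
  proof -
    have "v \<in> DS" using that subset_domain by blast
    thus ?thesis by (simp add: B_def An_scaleC scaleC_add_right)
  qed
  have "inj_on B (L n)"
  proof (rule inj_onI)
    fix a b assume ab: "a \<in> L n" "b \<in> L n" "B a = B b"
    have zL: "a - b \<in> L n" by (rule cvs.subspace_diff[OF subspace_L ab(1,2)])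
    have "B (a - b) = 0" using Badd[OF zL ab(2)] ab(3) by simp
    hence "a - b = 0" using An_plus_id_eq_0[OF zL] by (simp add: B_def)
    thus "a = b" by simp
  qed
  thus ?thesis unfolding B_def[symmetric] by (rule linear_on_inj_on_imp_surj_on[OF finite_dim BL _ Badd Bsc])
qed

lemma ritz_projection_exists:
  assumes u: "u \<in> DS"
  obtains x where "x \<in> L n" "\<And>y. y \<in> L n \<Longrightarrow> cinner (S y) (S (x - u)) + cinner y (x - u) = 0"
proof -
  define B where "B v = An n v + v" for v
  have "B ` L n = L n" unfolding B_def by (rule An_plus_id_surj)
  moreover have "An n u + cproj (L n) u \<in> L n"
    using An_in[OF u] cproj_in[OF finite_dim] subspace_L cvs.subspace_add by blast
  ultimately have "An n u + cproj (L n) u \<in> B ` L n" by simp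
  then obtain x where x: "An n u + cproj (L n) u = B x" "x \<in> L n" by (rule imageE)
  have xD: "x \<in> DS" using x(2) subset_domain by blast
  show ?thesis
  proof (rule that[OF x(2)])
    fix y assume y: "y \<in> L n"
    have "cinner y (B x) = cinner (S y) (S x) + cinner y x"
      using An_form[OF xD y] by (simp add: B_def cinner_add_right)
    moreover have "cinner y (An n u + cproj (L n) u) = cinner (S y) (S u) + cinner y u"
      using An_form[OF u y] cproj_orthogonal[OF finite_dim y, of u]
      by (simp add: cinner_add_right cinner_diff_right)
    ultimately have "cinner (S y) (S x) + cinner y x = cinner (S y) (S u) + cinner y u"
      using x(1) by simp
    hence "(cinner (S y) (S x) + cinner y x) - (cinner (S y) (S u) + cinner y u) = 0" by simp
    thus "cinner (S y) (S (x - u)) + cinner y (x - u) = 0"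
      by (simp only: S.A_diff[OF xD u] cinner_diff_right add_diff_add)
  qed
qed

lemma le_add_if_sum_squares_le:
  fixes a b d1 d2 :: real
  assumes a0: "a \<ge> 0" "b \<ge> 0" "d1 \<ge> 0" "d2 \<ge> 0" and ab: "a^2 + b^2 \<le> d1 * a + d2 * b"
  shows "b \<le> d1 + d2"
proof (cases "a \<le> b")
  case True
  have "b^2 \<le> d1 * a + d2 * b" using ab zero_le_power2[of a] by linarith
  also have "\<dots> \<le> d1 * b + d2 * b" using True a0 by (simp add: mult_left_mono)
  finally have "b * b \<le> (d1 + d2) * b" by (simp add: power2_eq_square algebra_simps)
  thus ?thesis using a0 by (cases "b = 0") (auto simp: mult_le_cancel_right)
next
  case False
  have "a^2 \<le> d1 * a + d2 * b" using ab zero_le_power2[of b] by linarith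
  also have "\<dots> \<le> d1 * a + d2 * a" using False a0 by (simp add: mult_left_mono)
  finally have "a * a \<le> (d1 + d2) * a" by (simp add: power2_eq_square algebra_simps)
  hence "a \<le> d1 + d2" using a0 False by (cases "a = 0") (auto simp: mult_le_cancel_right)
  thus ?thesis using False by simp
qed

lemma ritz_projection_quasi_optimal:
  assumes u: "u \<in> DS" and x: "x \<in> L n" "\<And>y. y \<in> L n \<Longrightarrow> cinner (S y) (S (x - u)) + cinner y (x - u) = 0"
    and g: "g \<in> L n"
  shows "norm (x - u) \<le> norm (g - u) + norm (S (g - u))"
proof -
  have xD: "x \<in> DS" and gD: "g \<in> DS" using x(1) g subset_domain by auto
  have xg: "x - g \<in> L n" using x(1) g subspace_L cvs.subspace_diff by blast
  have Sx: "S (x - u) = S (x - g) + S (g - u)"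
    using S.A_diff xD gD u by (simp add: S.A_diff)
  \<comment> \<open>Galerkin orthogonality removes the component \<open>x - g\<close>\<close>
  have orth: "cinner (S (x - u)) (S (x - u)) + cinner (x - u) (x - u) =
      cinner (S (g - u)) (S (x - u)) + cinner (g - u) (x - u)"
    using x(2)[OF xg] unfolding Sx
    by (simp add: cinner_add_left cinner_diff_left algebra_simps)
  have "(norm (S (x - u)))^2 + (norm (x - u))^2
      = Re (cinner (S (x - u)) (S (x - u)) + cinner (x - u) (x - u))"
    by (simp add: cinner_self_Re)
  also have "\<dots> = Re (cinner (S (g - u)) (S (x - u)) + cinner (g - u) (x - u))"
    by (simp only: orth)
  also have "\<dots> \<le> cmod (cinner (S (g - u)) (S (x - u)) + cinner (g - u) (x - u))"
    by (rule complex_Re_le_cmod)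
  also have "\<dots> \<le> cmod (cinner (S (g - u)) (S (x - u))) + cmod (cinner (g - u) (x - u))"
    by (rule norm_triangle_ineq)
  also have "\<dots> \<le> norm (S (g - u)) * norm (S (x - u)) + norm (g - u) * norm (x - u)"
    by (intro add_mono Cauchy_Schwarz)
  finally have "(norm (S (x - u)))^2 + (norm (x - u))^2
      \<le> norm (S (g - u)) * norm (S (x - u)) + norm (g - u) * norm (x - u)" .
  hence "norm (x - u) \<le> norm (S (g - u)) + norm (g - u)"
    by (rule le_add_if_sum_squares_le[OF norm_ge_zero norm_ge_zero norm_ge_zero norm_ge_zero])
  thus ?thesis by simp
qed

lemma ritz_projection_residual:
  assumes u: "u \<in> D" and x: "x \<in> L n" "\<And>y. y \<in> L n \<Longrightarrow> cinner (S y) (S (x - u)) + cinner y (x - u) = 0"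
  shows "norm (An n x - complex_of_real t *\<^sub>C x) \<le> norm (A u - complex_of_real t *\<^sub>C u) + \<bar>1 + t\<bar> * norm (u - x)"
proof -
  have uD: "u \<in> DS" "S u \<in> DS" using u domain_A by auto
  have xD: "x \<in> DS" using x(1) subset_domain by blast
  define w where "w = An n x - complex_of_real t *\<^sub>C x"
  have wL: "w \<in> L n"
    unfolding w_def using An_in[OF xD] x(1) subspace_L cvs.subspace_diff cvs.subspace_scale by blast
  hence wD: "w \<in> DS" using subset_domain by blast
  define r where "r = (A u - complex_of_real t *\<^sub>C u) + (1 + complex_of_real t) *\<^sub>C (u - x)"
  have "cinner (S w) (S x) = cinner w (A u) + cinner w u - cinner w x"
  proof -
    have "cinner (S w) (S u) = cinner w (A u)"
      using S.symmetric[OF wD uD(2)] sqrt_apply_sqrt[OF u] by simp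
    thus ?thesis using x(2)[OF wL] S.A_diff[OF xD uD(1)]
      by (simp add: cinner_diff_right algebra_simps)
  qed
  hence "cinner w w = cinner w r"
    using An_form[OF xD wL]
    by (simp add: w_def r_def cinner_diff_right cinner_add_right cinner_scaleC_right algebra_simps)
  moreover have "cmod (cinner w w) = (norm w)^2" by (simp only: cinner_self norm_of_real) simp
  ultimately have "(norm w)^2 \<le> norm w * norm r" using Cauchy_Schwarz[of w r] by simp
  hence "norm w \<le> norm r" by (cases "w = 0") (auto simp: power2_eq_square mult_le_cancel_left_pos)
  also have "\<dots> \<le> norm (A u - complex_of_real t *\<^sub>C u) + \<bar>1 + t\<bar> * norm (u - x)"
  proof -
    have "cmod (1 + complex_of_real t) = \<bar>1 + t\<bar>" by (metis norm_of_real of_real_1 of_real_add)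
    thus ?thesis
      using norm_triangle_ineq[of "A u - complex_of_real t *\<^sub>C u" "(1 + complex_of_real t) *\<^sub>C (u - x)"]
      by (simp only: r_def norm_scaleC)
  qed
  finally show ?thesis unfolding w_def .
qed

lemma residual_transfer:
  assumes u: "u \<in> D" and e: "e > 0"
  shows "\<exists>n\<ge>N. \<exists>x\<in>L n. norm (x - u) \<le> e \<and>
    norm (An n x - complex_of_real t *\<^sub>C x) \<le> norm (A u - complex_of_real t *\<^sub>C u) + e"
proof -
  have uD: "u \<in> DS" using u domain_A by auto
  obtain g where g: "\<And>n. g n \<in> L n" "(\<lambda>n. norm (g n - u) + norm (S (g n) - S u)) \<longlonglongrightarrow> 0"
    using regular uD unfolding op_regular_def by blast
  define K where "K = 1 + \<bar>1 + t\<bar>"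
  have K: "K \<ge> 1" by (simp add: K_def)
  hence "e / K > 0" using e by simp
  then obtain n where n: "n \<ge> N" "norm (g n - u) + norm (S (g n) - S u) < e / K"
    using graph_norm_close[OF g(2)] by blast
  define \<delta> where "\<delta> = norm (g n - u) + norm (S (g n - u))"
  have gD: "g n \<in> DS" using g(1) subset_domain by blast
  have \<delta>: "K * \<delta> \<le> e" "\<delta> \<ge> 0"
    using n(2) K unfolding \<delta>_def S.A_diff[OF gD uD] by (simp_all add: field_simps)
  obtain x where x: "x \<in> L n" "\<And>y. y \<in> L n \<Longrightarrow> cinner (S y) (S (x - u)) + cinner y (x - u) = 0"
    using ritz_projection_exists[OF uD] by metis
  have xu: "norm (x - u) \<le> \<delta>" unfolding \<delta>_def by (rule ritz_projection_quasi_optimal[OF uD x g(1)])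
  have "\<bar>1 + t\<bar> * norm (u - x) \<le> \<bar>1 + t\<bar> * \<delta>"
    using xu by (simp add: norm_minus_commute mult_left_mono)
  moreover have "\<delta> + \<bar>1 + t\<bar> * \<delta> \<le> e" using \<delta> by (simp add: K_def algebra_simps)
  ultimately have "norm (x - u) \<le> e \<and>
      norm (An n x - complex_of_real t *\<^sub>C x) \<le> norm (A u - complex_of_real t *\<^sub>C u) + e"
    using xu ritz_projection_residual[OF u x, of t] \<delta>(2) by (smt (verit) mult_nonneg_nonneg abs_ge_zero)
  thus ?thesis using n(1) x(1) by blast
qed

lemma norm_sqrt_eigenvector_squared:
  assumes "x \<in> L n" "norm x = 1" "An n x = \<mu> *\<^sub>C x"
  shows "(norm (S x))^2 = Re \<mu>"
proof -
  have "x \<in> DS" using assms(1) subset_domain by blast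
  hence "cinner (S x) (S x) = cinner x (An n x)" using An_form[OF _ assms(1)] by simp
  also have "\<dots> = \<mu>" using assms(2,3) by (simp add: cinner_scaleC_right cinner_self)
  finally show ?thesis by (simp add: cinner_self_Re[symmetric])
qed

lemma norm_sqrt_eigenvector_le:
  assumes "x \<in> L n" "norm x = 1" "An n x = \<mu> *\<^sub>C x" "cmod \<mu> \<le> M" "M > 0"
  shows "norm (S x) \<le> 1 + M"
proof -
  have "(norm (S x))^2 \<le> M"
    using norm_sqrt_eigenvector_squared[OF assms(1-3)] assms(4) complex_Re_le_cmod[of \<mu>] by linarith
  thus ?thesis by (smt (verit) assms(5) power2_eq_square mult_le_cancel_left1 norm_ge_zero)
qed

lemma eigenvector_limit:
  assumes sa: "selfadjoint D A" and nk: "filterlim nk at_top sequentially"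
    and x: "\<forall>k. x k \<in> L (nk k) \<and> norm (x k) = 1 \<and> An (nk k) (x k) = lk k *\<^sub>C x k"
    and lk: "lk \<longlonglongrightarrow> complex_of_real t" and w: "weakly_to x w"
  shows "w \<in> D \<and> A w = complex_of_real t *\<^sub>C w"
proof -
  interpret A: selfadjoint_op D A by unfold_locales (rule sa)
  have xn: "\<And>k. norm (x k) = 1" and xL: "\<And>k. x k \<in> L (nk k)" using x by auto
  have xD: "x k \<in> DS" for k using xL subset_domain by blast
  obtain M where M: "M > 0" "\<And>k. cmod (lk k) \<le> M"
    using convergent_imp_Bseq[of lk] lk unfolding convergent_def Bseq_def by blast
  have Sx: "norm (S (x k)) \<le> 1 + M" for k
    using norm_sqrt_eigenvector_le[OF xL xn, of k "lk k"] x M by blast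
  show ?thesis
  proof (rule A.eigenvector_if_form)
    fix f assume f: "f \<in> D"
    have fD: "f \<in> DS" "S f \<in> DS" using f domain_A by auto
    obtain g where g: "\<And>n. g n \<in> L n" "(\<lambda>n. norm (g n - f) + norm (S (g n) - S f)) \<longlonglongrightarrow> 0"
      using regular fD(1) unfolding op_regular_def by blast
    have g1: "(\<lambda>k. g (nk k)) \<longlonglongrightarrow> f" using filterlim_compose[OF graph_norm_tendsto(1)[OF g(2)] nk] .
    have g2: "(\<lambda>k. S (g (nk k))) \<longlonglongrightarrow> S f" using filterlim_compose[OF graph_norm_tendsto(2)[OF g(2)] nk] .
    have eq: "cinner (A f) (x k) = lk k * cinner (g (nk k)) (x k) - cinner (S (g (nk k)) - S f) (S (x k))" for k
    proof -
      have "cinner (S (g (nk k))) (S (x k)) = lk k * cinner (g (nk k)) (x k)"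
        using An_form[OF xD g(1), of "nk k" k] x by (simp add: cinner_scaleC_right)
      moreover have "cinner (S f) (S (x k)) = cinner (A f) (x k)"
        using S.symmetric[OF fD(2) xD] sqrt_apply_sqrt[OF f] by simp
      ultimately show ?thesis by (simp add: cinner_diff_left)
    qed
    have z: "(\<lambda>k. cinner (S (g (nk k)) - S f) (S (x k))) \<longlonglongrightarrow> 0"
    proof (rule Lim_null_comparison)
      show "\<forall>\<^sub>F k in sequentially. norm (cinner (S (g (nk k)) - S f) (S (x k))) \<le> norm (S (g (nk k)) - S f) * (1 + M)"
        using Cauchy_Schwarz order_trans mult_left_mono[OF Sx norm_ge_zero] by (intro always_eventually allI) blast
      have "(\<lambda>k. norm (S (g (nk k)) - S f) * (1 + M)) \<longlonglongrightarrow> norm (S f - S f) * (1 + M)"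
        by (intro tendsto_intros g2)
      thus "(\<lambda>k. norm (S (g (nk k)) - S f) * (1 + M)) \<longlonglongrightarrow> 0" by simp
    qed
    have "(\<lambda>k. cinner (A f) (x k)) \<longlonglongrightarrow> cinner (A f) w" using w unfolding weakly_to_def by blast
    moreover have "(\<lambda>k. lk k * cinner (g (nk k)) (x k) - cinner (S (g (nk k)) - S f) (S (x k)))
        \<longlonglongrightarrow> complex_of_real t * cinner f w - 0"
      by (rule tendsto_diff[OF tendsto_mult[OF lk tendsto_cinner_strong_weak[OF g1 w xn]] z])
    ultimately show "cinner (A f) w = complex_of_real t * cinner f w" unfolding eq by (simp add: LIMSEQ_unique)
  qed
qed

lemma galerkin_scheme_galerkin_form_op:
  assumes sa: "selfadjoint D A" and sep: "separable_space TYPE('a)"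
  shows "galerkin_scheme D A L An"
proof -
  interpret A: selfadjoint_op D A by unfold_locales (rule sa)
  show ?thesis
    using sa sep finite_dim An_in An_add An_scaleC subset_domain residual_transfer eigenvector_limit[OF sa]
    by unfold_locales blast+
qed

end

theorem proposition3p1:
  fixes D :: "'h::{complex_inner, complete_space} set"
    and A :: "'h \<Rightarrow> 'h"
    and L :: "nat \<Rightarrow> 'h set"
    and An :: "nat \<Rightarrow> 'h \<Rightarrow> 'h"
  assumes sep: "separable_space TYPE('h)"
    and infdim: "\<not> cfinite_dim (UNIV :: 'h set)"
    and sa: "selfadjoint D A"
    and gal: "(op_regular D A L \<and> An = galerkin_op A L) \<or>
              (\<exists>DS S. nonneg_op D A \<and> is_op_sqrt D A DS S \<and> op_regular DS S L \<and>
                      An = galerkin_form_op S L)"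
  shows "closed (lim_spectrum L An) \<and> closed (lim_ess_spectrum L An) \<and>
         ess_spectrum D A \<subseteq> complex_of_real ` lim_ess_spectrum L An \<and>
         complex_of_real ` lim_disc_spectrum L An \<subseteq> disc_spectrum D A"
proof -
  interpret A: selfadjoint_op D A by unfold_locales (rule sa)
  have "galerkin_scheme D A L An"
    using gal
  proof (elim disjE exE conjE)
    assume "op_regular D A L" "An = galerkin_op A L"
    thus ?thesis using A.galerkin_scheme_galerkin_op[OF sep] by simp
  next
    fix DS S assume "is_op_sqrt D A DS S" "op_regular DS S L" "An = galerkin_form_op S L"
    thus ?thesis using sqrt_galerkin.galerkin_scheme_galerkin_form_op[OF _ sa sep] sqrt_galerkin.intro by metis
  qed
  then interpret galerkin_scheme D A L An .
  show ?thesis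
    using closed_lim_spectrum closed_lim_ess_spectrum[OF sep] ess_spectrum_subset_lim_ess_spectrum
      lim_disc_spectrum_subset_disc_spectrum by blast
qed

end
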